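(* Let $(\Omega,\mathcal{F},\mathbb{P})$ be a nonatomic probability space and let $(\mathcal{X},\mathcal{X}^\ast)$ be a pair of law-invariant vector subspaces of $L^1$, each containing $L^\infty$, such that $XY\in L^1$ for all $X\in\mathcal{X}$ and $Y\in\mathcal{X}^\ast$. For $Z\in\mathcal{X}$ let $\mathcal{L}_Z=\{Z'\in\mathcal{X}: Z'\sim Z\}$. For every nonconstant $Z\in\mathcal{X}$: (i) if $\mathbb{E}_{\mathbb{P}}[Z]\neq0$, then $\mathrm{span}(\mathcal{L}_Z)$ is $\sigma(\mathcal{X},\mathcal{X}^\ast)$-dense in $\mathcal{X}$; (ii) if $\mathbb{E}_{\mathbb{P}}[Z]=0$, then the $\sigma(\mathcal{X},\mathcal{X}^\ast)$-closure of $\mathrm{span}(\mathcal{L}_Z)$ equals $\{X\in\mathcal{X}:\mathbb{E}_{\mathbb{P}}[X]=0\}$.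
   Context: $L^0$ denotes real random variables modulo a.s. equality; "nonconstant" means not a.s. constant. $Z'\sim Z$ means $Z'$ and $Z$ have the same law under $\mathbb{P}$. A set $\mathcal{S}\subset L^0$ is law invariant if $X\in\mathcal{S}$ whenever $X\in L^0$ and $X\sim Y$ for some $Y\in\mathcal{S}$. $\sigma(\mathcal{X},\mathcal{X}^\ast)$ is the weakest linear topology on $\mathcal{X}$ for which $X\mapsto\mathbb{E}_{\mathbb{P}}[XY]$ is continuous for every $Y\in\mathcal{X}^\ast$. $\mathrm{span}$ denotes the linear span. *)

theory Defs
  imports "HOL-Probability.Probability"
begin

text \<open>Real random variables are represented as Borel-measurable functions on the
  sample space; equality almost surely is handled through law invariance.\<close>

definition nonatomic :: "'a measure \<Rightarrow> bool" where
  "nonatomic M \<longleftrightarrow> (\<forall>A\<in>sets M. 0 < measure M A \<longrightarrow>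
      (\<exists>B\<in>sets M. B \<subseteq> A \<and> 0 < measure M B \<and> measure M B < measure M A))"

definition law_invariant :: "'a measure \<Rightarrow> ('a \<Rightarrow> real) set \<Rightarrow> bool" where
  "law_invariant M S \<longleftrightarrow> (\<forall>X Y. X \<in> borel_measurable M \<longrightarrow> Y \<in> S \<longrightarrow>
      distr M borel X = distr M borel Y \<longrightarrow> X \<in> S)"

definition fun_subspace :: "('a \<Rightarrow> real) set \<Rightarrow> bool" where
  "fun_subspace S \<longleftrightarrow> (\<lambda>_. 0) \<in> S \<and> (\<forall>X\<in>S. \<forall>Y\<in>S. (\<lambda>\<omega>. X \<omega> + Y \<omega>) \<in> S)
      \<and> (\<forall>c. \<forall>X\<in>S. (\<lambda>\<omega>. c * X \<omega>) \<in> S)"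

definition admissible_space :: "'a measure \<Rightarrow> ('a \<Rightarrow> real) set \<Rightarrow> bool" where
  "admissible_space M S \<longleftrightarrow> fun_subspace S \<and> law_invariant M S
     \<and> (\<forall>X\<in>S. integrable M X)
     \<and> (\<forall>X. X \<in> borel_measurable M \<longrightarrow> (\<exists>C. AE \<omega> in M. \<bar>X \<omega>\<bar> \<le> C) \<longrightarrow> X \<in> S)"

definition fun_span :: "('a \<Rightarrow> real) set \<Rightarrow> ('a \<Rightarrow> real) set" where
  "fun_span S = {f. \<exists>(n::nat) c g. (\<forall>i<n. g i \<in> S) \<and> f = (\<lambda>\<omega>. \<Sum>i<n. c i * g i \<omega>)}"

definition weak_top :: "'a measure \<Rightarrow> ('a \<Rightarrow> real) set \<Rightarrow> ('a \<Rightarrow> real) set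
    \<Rightarrow> ('a \<Rightarrow> real) topology" where
  "weak_top M S Sd = topology_generated_by
     {{X\<in>S. (\<integral>\<omega>. X \<omega> * Y \<omega> \<partial>M) \<in> U} | Y U. Y \<in> Sd \<and> open U}"

definition law_class :: "'a measure \<Rightarrow> ('a \<Rightarrow> real) set \<Rightarrow> ('a \<Rightarrow> real) \<Rightarrow> ('a \<Rightarrow> real) set" where
  "law_class M S Z = {Z'\<in>S. distr M borel Z' = distr M borel Z}"

end

theory Submission
  imports Defs
begin

(*
  If Y from the dual space annihilates the span of the law class of Z, then E[Z' Y] is the
  same for all copies Z' of Z. On a nonatomic space there are two copies Z1, Z2 of Z with
  Z1 >= Z2 on {Y > E Y}, Z1 <= Z2 on {Y <= E Y} and Z1 > Z2 on a non-null set, so that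
  E[Z1 Y] > E[Z2 Y] unless Y is a.s. constant. Hence only constants annihilate the span, and
  a constant c does so iff c = 0 or E Z = 0. A finite-dimensional interpolation argument shows
  that the weak closure of a subspace consists of the points that no dual element separates
  from it: the whole space when E Z is nonzero, and the kernel of E when E Z = 0.
  The copies are assembled from uniform random variables on events, obtained by nested
  dyadic splitting of events in the nonatomic space.
*)

section \<open>Dyadic approximation\<close>

lemma dyadic_between:
  fixes x y :: real
  assumes "0 \<le> x" "x < y"
  shows "\<exists>n k. x < real k / 2 ^ n \<and> real k / 2 ^ n < y"
proof -
  obtain n where n: "(1/2::real) ^ n < y - x"
    using real_arch_pow_inv[of "y - x" "1/2"] assms by auto
  define k where "k = nat \<lfloor>x * 2 ^ n\<rfloor> + 1"
  have "real k = of_int \<lfloor>x * 2 ^ n\<rfloor> + 1"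
    using assms unfolding k_def by simp
  then have "x * 2 ^ n < real k" "real k \<le> x * 2 ^ n + 1"
    by linarith+
  then have "x < real k / 2 ^ n" "real k / 2 ^ n \<le> x + (1/2) ^ n"
    by (simp_all add: field_simps)
  then show ?thesis
    using n by (intro exI[of _ n] exI[of _ k]) auto
qed

lemma eq_mult_of_dyadic_bounds:
  fixes a c q :: real
  assumes a: "0 \<le> a" and c: "0 \<le> c" and q: "0 \<le> q"
    and below: "\<And>n k. real k / 2 ^ n < c \<Longrightarrow> real k / 2 ^ n * q \<le> a"
    and above: "\<And>n k. c < real k / 2 ^ n \<Longrightarrow> a \<le> real k / 2 ^ n * q"
  shows "a = c * q"
proof (rule linorder_cases[of a "c * q"])
  assume less: "a < c * q"
  then have "0 < q"
    using a q by (cases "q = 0") auto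
  then have "max 0 (a / q) < c"
    using less a by (auto simp: field_simps)
  then obtain n k where "max 0 (a / q) < real k / 2 ^ n" "real k / 2 ^ n < c"
    using dyadic_between[of "max 0 (a / q)" c] by auto
  then show ?thesis
    using below[of k n] \<open>0 < q\<close> by (simp add: field_simps)
next
  assume greater: "c * q < a"
  obtain n k where "c < real k / 2 ^ n" "real k / 2 ^ n * q < a"
  proof (cases "q = 0")
    case True
    then show ?thesis
      using that dyadic_between[of c "c + 1"] greater c by auto
  next
    case False
    then have "c < a / q"
      using greater q by (simp add: field_simps)
    then obtain n k where "c < real k / 2 ^ n" "real k / 2 ^ n < a / q"
      using dyadic_between[of c "a / q"] c by auto
    then show ?thesis
      using that False q by (simp add: field_simps)
  qed
  then show ?thesis
    using above[of k n] by simp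
qed

text \<open>\<open>dyadic_split mid a b n k\<close> sits at the dyadic point \<open>k / 2 ^ n\<close>: it is \<open>a\<close> at \<open>0\<close>,
  \<open>b\<close> from \<open>1\<close> on, and each new point is the \<open>mid\<close>-point of its two neighbours.\<close>

definition dyadic_split :: "('b \<Rightarrow> 'b \<Rightarrow> 'b) \<Rightarrow> 'b \<Rightarrow> 'b \<Rightarrow> nat \<Rightarrow> nat \<Rightarrow> 'b" where
  "dyadic_split mid a b = rec_nat (\<lambda>k. if k = 0 then a else b)
     (\<lambda>n D k. if even k then D (k div 2) else mid (D (k div 2)) (D (Suc (k div 2))))"

lemma dyadic_split_0: "dyadic_split mid a b 0 k = (if k = 0 then a else b)"
  by (simp add: dyadic_split_def)

lemma dyadic_split_Suc:
  "dyadic_split mid a b (Suc n) k = (if even k then dyadic_split mid a b n (k div 2)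
    else mid (dyadic_split mid a b n (k div 2)) (dyadic_split mid a b n (Suc (k div 2))))"
  by (simp add: dyadic_split_def)

lemma min_dyadic_midpoint:
  "(min (real j / 2 ^ n) 1 + min (real (Suc j) / 2 ^ n) 1) / 2
     = min (real (2 * j + 1) / 2 ^ Suc n) 1"
proof (cases "Suc j \<le> 2 ^ n")
  case True
  then have "real (Suc j) \<le> 2 ^ n"
    by (metis of_nat_le_iff of_nat_numeral of_nat_power)
  then show ?thesis
    using True by (simp add: min_def field_simps)
next
  case False
  have one_le: "1 \<le> real a / 2 ^ m" if "2 ^ m \<le> a" for a m :: nat
    using that by (simp add: le_divide_eq)
  have "1 \<le> real j / 2 ^ n" "1 \<le> real (Suc j) / 2 ^ n" "1 \<le> real (2 * j + 1) / 2 ^ Suc n"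
    using False by (intro one_le, simp)+
  then show ?thesis
    by (simp only: min_absorb2) simp
qed

lemma dyadic_split_interpolates:
  fixes f :: "'b \<Rightarrow> real"
  assumes R: "R a b" "R b b" and f_a: "f a = 0"
    and mid: "\<And>x y. R x y \<Longrightarrow> R x (mid x y) \<and> R (mid x y) y \<and> f (mid x y) = (f x + f y) / 2"
  shows "R (dyadic_split mid a b n k) (dyadic_split mid a b n (Suc k))
    \<and> f (dyadic_split mid a b n k) = min (real k / 2 ^ n) 1 * f b"
proof (induction n arbitrary: k)
  case 0
  then show ?case
    using R f_a by (simp add: dyadic_split_0)
next
  case (Suc n)
  let ?D = "dyadic_split mid a b"
  show ?case
  proof (cases "even k")
    case True
    then obtain j where k: "k = 2 * j"
      by blast
    have "?D (Suc n) k = ?D n j" "?D (Suc n) (Suc k) = mid (?D n j) (?D n (Suc j))"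
      by (simp_all add: dyadic_split_Suc k)
    moreover have "min (real k / 2 ^ Suc n) 1 = min (real j / 2 ^ n) 1"
      by (simp add: k)
    ultimately show ?thesis
      using mid Suc[of j] by simp
  next
    case False
    then obtain j where k: "k = 2 * j + 1"
      using oddE by blast
    have D: "?D (Suc n) k = mid (?D n j) (?D n (Suc j))" "?D (Suc n) (Suc k) = ?D n (Suc j)"
      by (simp_all add: dyadic_split_Suc k)
    have "f (?D (Suc n) k) = (f (?D n j) + f (?D n (Suc j))) / 2"
      unfolding D using mid Suc[of j] by blast
    also have "\<dots> = (min (real j / 2 ^ n) 1 + min (real (Suc j) / 2 ^ n) 1) / 2 * f b"
      using Suc[of j] Suc[of "Suc j"] by (simp add: field_simps)
    also have "\<dots> = min (real k / 2 ^ Suc n) 1 * f b"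
      unfolding min_dyadic_midpoint k ..
    finally show ?thesis
      unfolding D using mid Suc[of j] by blast
  qed
qed

lemma dyadic_indexed_mono:
  fixes D :: "nat \<Rightarrow> nat \<Rightarrow> 'b::order"
  assumes step: "\<And>n k. D n k \<le> D n (Suc k)" and double: "\<And>n k. D (Suc n) (2 * k) = D n k"
    and le: "real k / 2 ^ n \<le> real j / 2 ^ m"
  shows "D n k \<le> D m j"
proof -
  have rescale: "D (n + d) (k * 2 ^ d) = D n k" for n d k
  proof (induction d)
    case (Suc d)
    have "D (n + Suc d) (k * 2 ^ Suc d) = D (Suc (n + d)) (2 * (k * 2 ^ d))"
      by (simp add: ac_simps)
    then show ?case
      using double Suc by simp
  qed simp
  have "real (k * 2 ^ m) \<le> real (j * 2 ^ n)"
    using le by (simp add: field_simps)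
  then have "D (n + m) (k * 2 ^ m) \<le> D (n + m) (j * 2 ^ n)"
    by (intro lift_Suc_mono_le[of "D (n + m)", OF step]) (simp only: of_nat_le_iff)
  then show ?thesis
    using rescale[of n m k] rescale[of m n j] by (simp add: add.commute)
qed

definition dyadic_inf :: "(nat \<Rightarrow> nat \<Rightarrow> 'a set) \<Rightarrow> 'a \<Rightarrow> real" where
  "dyadic_inf A \<omega> = Inf (insert 1 {real k / 2 ^ n |n k. \<omega> \<in> A n k})"

lemma dyadic_inf_less_iff:
  "dyadic_inf A \<omega> < x \<longleftrightarrow> 1 < x \<or> (\<exists>n k. real k / 2 ^ n < x \<and> \<omega> \<in> A n k)"
proof -
  have "bdd_below (insert 1 {real k / 2 ^ n |n k. \<omega> \<in> A n k})"
    by (auto intro!: bdd_belowI[of _ 0])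
  then show ?thesis
    unfolding dyadic_inf_def by (subst cInf_less_iff) auto
qed

lemma dyadic_inf_le: "\<omega> \<in> A n k \<Longrightarrow> dyadic_inf A \<omega> \<le> real k / 2 ^ n"
  unfolding dyadic_inf_def by (intro cInf_lower) (auto intro!: bdd_belowI[of _ 0])

lemma measurable_dyadic_inf[measurable]:
  assumes [measurable]: "\<And>n k. A n k \<in> sets M"
  shows "dyadic_inf A \<in> borel_measurable M"
proof (rule borel_measurableI_less)
  fix x
  have "{\<omega>\<in>space M. dyadic_inf A \<omega> < x}
      = {\<omega>\<in>space M. 1 < x \<or> (\<exists>n k. real k / 2 ^ n < x \<and> \<omega> \<in> A n k)}"
    by (simp add: dyadic_inf_less_iff)
  also have "\<dots> \<in> sets M"
    by measurable
  finally show "{\<omega>\<in>space M. dyadic_inf A \<omega> < x} \<in> sets M" .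
qed

section \<open>Nonatomic probability spaces\<close>

lemma Sup_le_twice_member:
  fixes X :: "real set"
  assumes "0 \<in> X" "bdd_above X"
  shows "\<exists>x\<in>X. Sup X \<le> 2 * x"
proof (cases "Sup X \<le> 0")
  case True
  then show ?thesis
    using assms(1) by (intro bexI[of _ 0]) auto
next
  case False
  then obtain x where "x \<in> X" "Sup X / 2 < x"
    using less_cSup_iff[of X "Sup X / 2"] assms by fastforce
  then show ?thesis
    by (intro bexI[of _ x]) auto
qed

context prob_space
begin

lemma prob_split_by_event:
  assumes B: "B \<in> events" and P: "{\<omega>\<in>space M. P \<omega>} \<in> events"
  shows "prob {\<omega>\<in>space M. P \<omega>}
    = prob {\<omega>\<in>space M. \<omega> \<in> B \<and> P \<omega>} + prob {\<omega>\<in>space M. \<omega> \<notin> B \<and> P \<omega>}"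
proof -
  have split: "{\<omega>\<in>space M. P \<omega>} = {\<omega>\<in>space M. \<omega> \<in> B \<and> P \<omega>} \<union> {\<omega>\<in>space M. \<omega> \<notin> B \<and> P \<omega>}"
    by auto
  have "{\<omega>\<in>space M. \<omega> \<in> B \<and> P \<omega>} = B \<inter> {\<omega>\<in>space M. P \<omega>}"
    "{\<omega>\<in>space M. \<omega> \<notin> B \<and> P \<omega>} = {\<omega>\<in>space M. P \<omega>} - B"
    by auto
  then have "{\<omega>\<in>space M. \<omega> \<in> B \<and> P \<omega>} \<in> events" "{\<omega>\<in>space M. \<omega> \<notin> B \<and> P \<omega>} \<in> events"
    using B P by auto
  then show ?thesis
    unfolding split by (intro finite_measure_Union) auto
qed

lemma distr_eq_of_prob_le_eq:
  fixes X Y :: "'a \<Rightarrow> real"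
  assumes X: "X \<in> borel_measurable M" and Y: "Y \<in> borel_measurable M"
    and eq: "\<And>y. prob {\<omega>\<in>space M. X \<omega> \<le> y} = prob {\<omega>\<in>space M. Y \<omega> \<le> y}"
  shows "distr M borel X = distr M borel Y"
proof (rule cdf_unique)
  have cdf_distr: "cdf (distr M borel Z) y = prob {\<omega>\<in>space M. Z \<omega> \<le> y}"
    if "Z \<in> borel_measurable M" for Z y
    using that unfolding cdf_def by (simp add: measure_distr vimage_def Int_def conj_commute)
  show "cdf (distr M borel X) = cdf (distr M borel Y)"
    using eq X Y by (simp add: fun_eq_iff cdf_distr)
qed (simp_all add: X Y)

lemma prob_le_eq_0_iff_AE:
  fixes W :: "'a \<Rightarrow> real"
  assumes [measurable]: "Q \<in> events" "W \<in> borel_measurable M"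
  shows "prob {\<omega>\<in>space M. \<omega> \<in> Q \<and> W \<omega> \<le> s} = 0 \<longleftrightarrow> (AE \<omega> in M. \<omega> \<in> Q \<longrightarrow> s < W \<omega>)"
  by (subst prob_Collect_eq_0) (measurable, auto simp: not_le)

lemma prob_le_eq_prob_iff_AE:
  fixes W :: "'a \<Rightarrow> real"
  assumes Q[measurable]: "Q \<in> events" and [measurable]: "W \<in> borel_measurable M"
  shows "prob {\<omega>\<in>space M. \<omega> \<in> Q \<and> W \<omega> \<le> s} = prob Q \<longleftrightarrow> (AE \<omega> in M. \<omega> \<in> Q \<longrightarrow> W \<omega> \<le> s)"
proof -
  have "Q - {\<omega>\<in>space M. \<omega> \<in> Q \<and> W \<omega> \<le> s} = {\<omega>\<in>space M. \<omega> \<in> Q \<and> s < W \<omega>}"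
    using sets.sets_into_space[OF Q] by auto
  moreover have "prob (Q - {\<omega>\<in>space M. \<omega> \<in> Q \<and> W \<omega> \<le> s})
      = prob Q - prob {\<omega>\<in>space M. \<omega> \<in> Q \<and> W \<omega> \<le> s}"
    by (rule finite_measure_Diff) (measurable, auto)
  ultimately have "prob {\<omega>\<in>space M. \<omega> \<in> Q \<and> W \<omega> \<le> s} = prob Q
      \<longleftrightarrow> prob {\<omega>\<in>space M. \<omega> \<in> Q \<and> s < W \<omega>} = 0"
    by auto
  also have "\<dots> \<longleftrightarrow> (AE \<omega> in M. \<omega> \<in> Q \<longrightarrow> W \<omega> \<le> s)"
    by (subst prob_Collect_eq_0) (measurable, auto simp: not_less)
  finally show ?thesis .
qed

lemma nonatomic_small_subset:
  assumes na: "nonatomic M" and A: "A \<in> events" "0 < prob A" and e: "0 < e"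
  shows "\<exists>B\<in>events. B \<subseteq> A \<and> 0 < prob B \<and> prob B < e"
proof -
  have halving: "\<exists>B\<in>events. B \<subseteq> A \<and> 0 < prob B \<and> prob B \<le> prob A / 2 ^ n" for n
  proof (induction n)
    case 0
    then show ?case using A by auto
  next
    case (Suc n)
    then obtain B where B: "B \<in> events" "B \<subseteq> A" "0 < prob B" "prob B \<le> prob A / 2 ^ n"
      by auto
    with na obtain B' where B': "B' \<in> events" "B' \<subseteq> B" "0 < prob B'" "prob B' < prob B"
      unfolding nonatomic_def by blast
    have "prob (B - B') = prob B - prob B'"
      using B B' by (simp add: finite_measure_Diff)
    show ?case
    proof (cases "prob B' \<le> prob B / 2")
      case True
      then show ?thesis using B B' by (intro bexI[of _ B']) auto
    next
      case False
      then show ?thesis using B B' \<open>prob (B - B') = _\<close> by (intro bexI[of _ "B - B'"]) auto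
    qed
  qed
  obtain n where n: "(1/2::real) ^ n < e"
    using real_arch_pow_inv[OF e, of "1/2"] by auto
  obtain B where B: "B \<in> events" "B \<subseteq> A" "0 < prob B" "prob B \<le> prob A / 2 ^ n"
    using halving by blast
  have "prob A / 2 ^ n \<le> (1/2) ^ n"
    by (simp add: power_divide divide_right_mono)
  then show ?thesis
    using B n by (intro bexI[of _ B]) auto
qed

text \<open>Greedy exhaustion: keep adding a subset that realises at least half of the largest
  admissible gain. The gains tend to zero, so nothing of positive probability can be added
  to the limit.\<close>

lemma exists_saturated_subset:
  assumes A: "A \<in> events" and t: "0 \<le> t"
  shows "\<exists>B\<in>events. B \<subseteq> A \<and> prob B \<le> t
    \<and> (\<forall>C\<in>events. C \<subseteq> A - B \<longrightarrow> prob B + prob C \<le> t \<longrightarrow> prob C = 0)"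
proof -
  define gains where
    "gains B = {prob C |C. C \<in> events \<and> C \<subseteq> A - B \<and> prob B + prob C \<le> t}" for B
  define feasible where "feasible B \<longleftrightarrow> B \<in> events \<and> B \<subseteq> A \<and> prob B \<le> t" for B
  define good_step where "good_step B C \<longleftrightarrow>
      C \<in> events \<and> C \<subseteq> A - B \<and> prob B + prob C \<le> t \<and> Sup (gains B) \<le> 2 * prob C" for B C
  have gains_bdd: "bdd_above (gains B)" for B
    unfolding gains_def by (auto intro!: bdd_aboveI[of _ 1])
  have exists_step: "\<exists>C. good_step B C" if "feasible B" for B
  proof -
    have "prob {} \<in> gains B"
      using that unfolding gains_def feasible_def by (intro CollectI exI[of _ "{}"]) auto
    then obtain g where "g \<in> gains B" "Sup (gains B) \<le> 2 * g"
      using Sup_le_twice_member[OF _ gains_bdd] by auto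
    then show ?thesis
      unfolding gains_def good_step_def by blast
  qed
  define next_step where "next_step B = (SOME C. good_step B C)" for B
  have step: "next_step B \<in> events \<and> next_step B \<subseteq> A - B \<and> prob B + prob (next_step B) \<le> t
      \<and> Sup (gains B) \<le> 2 * prob (next_step B)" if "feasible B" for B
    using someI_ex[OF exists_step[OF that]] unfolding next_step_def good_step_def .
  define Bs where "Bs n = ((\<lambda>B. B \<union> next_step B) ^^ n) {}" for n
  have Bs_Suc: "Bs (Suc n) = Bs n \<union> next_step (Bs n)" for n
    by (simp add: Bs_def)
  have feasible_Bs: "feasible (Bs n)" for n
  proof (induction n)
    case 0
    then show ?case using t by (simp add: Bs_def feasible_def)
  next
    case (Suc n)
    then show ?case
      using step[OF Suc] unfolding Bs_Suc feasible_def
      by (subst finite_measure_Union) auto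
  qed
  have prob_Bs_Suc: "prob (Bs (Suc n)) = prob (Bs n) + prob (next_step (Bs n))" for n
    using step[OF feasible_Bs[of n]] feasible_Bs[of n] unfolding Bs_Suc feasible_def
    by (intro finite_measure_Union) auto
  define B where "B = (\<Union>n. Bs n)"
  have Bs_events: "range Bs \<subseteq> events" and "incseq Bs"
    using feasible_Bs by (auto simp: feasible_def Bs_Suc intro!: incseq_SucI)
  then have lim: "(\<lambda>n. prob (Bs n)) \<longlonglongrightarrow> prob B"
    unfolding B_def by (rule finite_Lim_measure_incseq)
  have B: "B \<in> events" "B \<subseteq> A" "prob B \<le> t"
    using Bs_events feasible_Bs unfolding B_def feasible_def
    by (auto intro!: LIMSEQ_le_const2[OF lim[unfolded B_def]])
  have "(\<lambda>n. prob (Bs (Suc n)) - prob (Bs n)) \<longlonglongrightarrow> prob B - prob B"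
    by (intro tendsto_diff lim LIMSEQ_Suc)
  then have gains_to_0: "(\<lambda>n. 2 * prob (next_step (Bs n))) \<longlonglongrightarrow> 0"
    using tendsto_mult_right_zero[of _ sequentially 2] by (simp add: prob_Bs_Suc)
  have "prob C = 0" if C: "C \<in> events" "C \<subseteq> A - B" "prob B + prob C \<le> t" for C
  proof -
    have "prob C \<le> 2 * prob (next_step (Bs n))" for n
    proof -
      have "prob (Bs n) \<le> prob B"
        using Bs_events B unfolding B_def by (intro finite_measure_mono) auto
      moreover have "C \<subseteq> A - Bs n"
        using C unfolding B_def by auto
      ultimately have "prob C \<in> gains (Bs n)"
        using C unfolding gains_def by (intro CollectI exI[of _ C]) auto
      then show ?thesis
        using step[OF feasible_Bs[of n]] cSup_upper[OF _ gains_bdd] by fastforce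
    qed
    then have "prob C \<le> 0"
      using LIMSEQ_le_const[OF gains_to_0] by auto
    then show ?thesis
      using measure_nonneg[of M C] by linarith
  qed
  then show ?thesis
    using B by blast
qed

lemma nonatomic_subset_prob_eq:
  assumes na: "nonatomic M" and A: "A \<in> events" and t: "0 \<le> t" "t \<le> prob A"
  shows "\<exists>B\<in>events. B \<subseteq> A \<and> prob B = t"
proof -
  obtain B where B: "B \<in> events" "B \<subseteq> A" "prob B \<le> t"
    and saturated: "\<And>C. C \<in> events \<Longrightarrow> C \<subseteq> A - B \<Longrightarrow> prob B + prob C \<le> t \<Longrightarrow> prob C = 0"
    using exists_saturated_subset[OF A t(1)] by blast
  have "prob B = t"
  proof (rule ccontr)
    assume "prob B \<noteq> t"
    then have "prob B < t"
      using B(3) by simp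
    moreover have "prob (A - B) = prob A - prob B"
      using A B by (simp add: finite_measure_Diff)
    ultimately obtain C where "C \<in> events" "C \<subseteq> A - B" "0 < prob C" "prob C < t - prob B"
      using nonatomic_small_subset[OF na, of "A - B" "t - prob B"] A B t by auto
    then show False
      using saturated[of C] by simp
  qed
  then show ?thesis
    using B by blast
qed

lemma nonatomic_exists_between:
  assumes na: "nonatomic M" and B: "B1 \<in> events" "B2 \<in> events" "B1 \<subseteq> B2"
  shows "\<exists>B\<in>events. B1 \<subseteq> B \<and> B \<subseteq> B2 \<and> prob B = (prob B1 + prob B2) / 2"
proof -
  have diff: "prob (B2 - B1) = prob B2 - prob B1"
    using B by (simp add: finite_measure_Diff)
  obtain C where C: "C \<in> events" "C \<subseteq> B2 - B1" "prob C = prob (B2 - B1) / 2"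
    using nonatomic_subset_prob_eq[OF na, of "B2 - B1" "prob (B2 - B1) / 2"] B by auto
  have "prob (B1 \<union> C) = prob B1 + prob C"
    using B C by (intro finite_measure_Union) auto
  also have "\<dots> = (prob B1 + prob B2) / 2"
    using C diff by simp
  finally show ?thesis
    using B C by (intro bexI[of _ "B1 \<union> C"]) auto
qed

lemma nonatomic_dyadic_family:
  assumes na: "nonatomic M" and Q: "Q \<in> events"
  shows "\<exists>A. (\<forall>n k. A n k \<in> events \<and> A n k \<subseteq> Q
              \<and> prob (A n k) = min (real k / 2 ^ n) 1 * prob Q)
          \<and> (\<forall>n k m j. real k / 2 ^ n \<le> real j / 2 ^ m \<longrightarrow> A n k \<subseteq> A m j)"
proof -
  define R where "R B1 B2 \<longleftrightarrow> B1 \<in> events \<and> B2 \<in> events \<and> B1 \<subseteq> B2 \<and> B2 \<subseteq> Q" for B1 B2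
  define mid where "mid B1 B2 =
      (SOME B. B \<in> events \<and> B1 \<subseteq> B \<and> B \<subseteq> B2 \<and> prob B = (prob B1 + prob B2) / 2)" for B1 B2
  have mid: "R B1 (mid B1 B2) \<and> R (mid B1 B2) B2 \<and> prob (mid B1 B2) = (prob B1 + prob B2) / 2"
    if "R B1 B2" for B1 B2
  proof -
    have "\<exists>B. B \<in> events \<and> B1 \<subseteq> B \<and> B \<subseteq> B2 \<and> prob B = (prob B1 + prob B2) / 2"
      using nonatomic_exists_between[OF na, of B1 B2] that unfolding R_def by auto
    then have "mid B1 B2 \<in> events \<and> B1 \<subseteq> mid B1 B2 \<and> mid B1 B2 \<subseteq> B2
        \<and> prob (mid B1 B2) = (prob B1 + prob B2) / 2"
      unfolding mid_def by (rule someI_ex)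
    then show ?thesis
      using that unfolding R_def by auto
  qed
  have "R {} Q" "R Q Q" "prob {} = 0"
    using Q unfolding R_def by auto
  note D = dyadic_split_interpolates[of R, OF this mid]
  have "dyadic_split mid {} Q n k \<subseteq> dyadic_split mid {} Q m j"
    if "real k / 2 ^ n \<le> real j / 2 ^ m" for n k m j
  proof (rule dyadic_indexed_mono[OF _ _ that])
    show "dyadic_split mid {} Q n k \<subseteq> dyadic_split mid {} Q n (Suc k)" for n k
      using D[of n k] unfolding R_def by simp
  qed (simp add: dyadic_split_Suc)
  moreover have "dyadic_split mid {} Q n k \<in> events \<and> dyadic_split mid {} Q n k \<subseteq> Q
      \<and> prob (dyadic_split mid {} Q n k) = min (real k / 2 ^ n) 1 * prob Q" for n k
    using D[of n k] unfolding R_def by auto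
  ultimately show ?thesis
    by (intro exI[of _ "dyadic_split mid {} Q"] conjI allI impI) simp_all
qed

lemma prob_dyadic_inf:
  assumes Q: "Q \<in> events" and A: "\<And>n k. A n k \<in> events" "\<And>n k. A n k \<subseteq> Q"
    and prob_A: "\<And>n k. prob (A n k) = min (real k / 2 ^ n) 1 * prob Q"
    and A_mono: "\<And>n k m j. real k / 2 ^ n \<le> real j / 2 ^ m \<Longrightarrow> A n k \<subseteq> A m j"
    and c: "c \<in> {0..1}" and S: "S \<in> events"
      "{\<omega>\<in>space M. \<omega> \<in> Q \<and> dyadic_inf A \<omega> < c} \<subseteq> S"
      "S \<subseteq> {\<omega>\<in>space M. \<omega> \<in> Q \<and> dyadic_inf A \<omega> \<le> c}"
  shows "prob S = c * prob Q"
proof (rule eq_mult_of_dyadic_bounds)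
  fix n k
  assume less: "real k / 2 ^ n < c"
  then have "A n k \<subseteq> S"
    using A(2) sets.sets_into_space[OF Q] S(2) dyadic_inf_le[of _ A n k] by fastforce
  moreover have "min (real k / 2 ^ n) 1 = real k / 2 ^ n"
    using less c unfolding atLeastAtMost_iff by (intro min_absorb1) linarith
  ultimately show "real k / 2 ^ n * prob Q \<le> prob S"
    using finite_measure_mono[OF \<open>A n k \<subseteq> S\<close> S(1)] prob_A[of n k] by simp
next
  fix n k
  assume greater: "c < real k / 2 ^ n"
  show "prob S \<le> real k / 2 ^ n * prob Q"
  proof (cases "real k / 2 ^ n \<le> 1")
    case True
    have "S \<subseteq> A n k"
    proof
      fix \<omega> assume "\<omega> \<in> S"
      then have "dyadic_inf A \<omega> < real k / 2 ^ n"
        using S(3) greater by fastforce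
      then obtain m j where "real j / 2 ^ m < real k / 2 ^ n" "\<omega> \<in> A m j"
        using True dyadic_inf_less_iff[of A \<omega>] by auto
      then show "\<omega> \<in> A n k"
        using A_mono[of j m k n] by auto
    qed
    then have "prob S \<le> prob (A n k)"
      by (rule finite_measure_mono[OF _ A(1)])
    then show ?thesis
      using prob_A[of n k] True by (simp add: min_absorb1)
  next
    case False
    have "prob S \<le> prob Q"
      using S(3) Q by (intro finite_measure_mono) auto
    also have "\<dots> \<le> real k / 2 ^ n * prob Q"
      using False by (intro mult_le_cancel_right1[THEN iffD2]) auto
    finally show ?thesis .
  qed
qed (use c in auto)

lemma nonatomic_uniform_on_event:
  assumes na: "nonatomic M" and Q[measurable]: "Q \<in> events"
  shows "\<exists>U\<in>borel_measurable M. (AE \<omega> in M. \<omega> \<in> Q \<longrightarrow> 0 < U \<omega> \<and> U \<omega> < 1)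
     \<and> (\<forall>c\<in>{0..1}. prob {\<omega>\<in>space M. \<omega> \<in> Q \<and> U \<omega> \<le> c} = c * prob Q)"
proof -
  obtain A where A[measurable]: "\<And>n k. A n k \<in> events" and A_Q: "\<And>n k. A n k \<subseteq> Q"
    and prob_A: "\<And>n k. prob (A n k) = min (real k / 2 ^ n) 1 * prob Q"
    and A_mono: "\<And>n k m j. real k / 2 ^ n \<le> real j / 2 ^ m \<Longrightarrow> A n k \<subseteq> A m j"
    using nonatomic_dyadic_family[OF na Q] by metis
  define U where "U = dyadic_inf A"
  have [measurable]: "U \<in> borel_measurable M"
    unfolding U_def by measurable
  have sublevel_events: "{\<omega>\<in>space M. \<omega> \<in> Q \<and> U \<omega> \<le> c} \<in> events"
    "{\<omega>\<in>space M. \<omega> \<in> Q \<and> U \<omega> < c} \<in> events" for c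
    by measurable measurable
  have prob_U: "prob S = c * prob Q" if "c \<in> {0..1}" "S \<in> events"
    "{\<omega>\<in>space M. \<omega> \<in> Q \<and> U \<omega> < c} \<subseteq> S" "S \<subseteq> {\<omega>\<in>space M. \<omega> \<in> Q \<and> U \<omega> \<le> c}" for c S
    using prob_dyadic_inf[OF Q A A_Q prob_A A_mono that[unfolded U_def]] .
  have uniform: "prob {\<omega>\<in>space M. \<omega> \<in> Q \<and> U \<omega> \<le> c} = c * prob Q" if "c \<in> {0..1}" for c
    using prob_U[OF that sublevel_events(1)] by force
  have "prob {\<omega>\<in>space M. \<omega> \<in> Q \<and> 1 \<le> U \<omega>} = 0"
  proof -
    have "{\<omega>\<in>space M. \<omega> \<in> Q \<and> 1 \<le> U \<omega>} = Q - {\<omega>\<in>space M. \<omega> \<in> Q \<and> U \<omega> < 1}"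
      using sets.sets_into_space[OF Q] by auto
    moreover have "prob {\<omega>\<in>space M. \<omega> \<in> Q \<and> U \<omega> < 1} = prob Q"
      using prob_U[of 1, OF _ sublevel_events(2)] by force
    ultimately show ?thesis
      using finite_measure_Diff[OF Q sublevel_events(2), of 1] by auto
  qed
  then have "AE \<omega> in M. \<not> (\<omega> \<in> Q \<and> U \<omega> \<le> 0)" "AE \<omega> in M. \<not> (\<omega> \<in> Q \<and> 1 \<le> U \<omega>)"
    using uniform[of 0] by (simp_all add: prob_Collect_eq_0)
  then have "AE \<omega> in M. \<omega> \<in> Q \<longrightarrow> 0 < U \<omega> \<and> U \<omega> < 1"
    by eventually_elim auto
  with uniform show ?thesis
    by (intro bexI[of _ U]) auto
qed

text \<open>The witness is the quantile transform of a uniform variable on \<open>Q\<close>.\<close>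

lemma nonatomic_realize_distribution:
  assumes na: "nonatomic M" and Q[measurable]: "Q \<in> events" and \<nu>: "real_distribution \<nu>"
  shows "\<exists>W\<in>borel_measurable M. \<forall>y. prob {\<omega>\<in>space M. \<omega> \<in> Q \<and> W \<omega> \<le> y} = prob Q * cdf \<nu> y"
proof -
  interpret \<nu>: cdf_distribution \<nu>
    using \<nu> by (simp add: cdf_distribution_def)
  obtain U where U[measurable]: "U \<in> borel_measurable M"
    and U_01: "AE \<omega> in M. \<omega> \<in> Q \<longrightarrow> 0 < U \<omega> \<and> U \<omega> < 1"
    and U_uniform: "\<And>c. c \<in> {0..1} \<Longrightarrow> prob {\<omega>\<in>space M. \<omega> \<in> Q \<and> U \<omega> \<le> c} = c * prob Q"
    using nonatomic_uniform_on_event[OF na Q] by blast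
  define W where "W \<omega> = (if 0 < U \<omega> \<and> U \<omega> < 1 then \<nu>.I (U \<omega>) else 0)" for \<omega>
  have W_le: "W \<omega> \<le> y \<longleftrightarrow> (0 < U \<omega> \<and> U \<omega> < 1 \<and> U \<omega> \<le> cdf \<nu> y)
      \<or> (\<not> (0 < U \<omega> \<and> U \<omega> < 1) \<and> 0 \<le> y)" for \<omega> y
    using \<nu>.pseudoinverse[of "U \<omega>" y] by (auto simp: W_def)
  have W_measurable: "W \<in> borel_measurable M"
  proof (rule borel_measurableI_le)
    fix y
    have "{\<omega>\<in>space M. W \<omega> \<le> y} = {\<omega>\<in>space M. (0 < U \<omega> \<and> U \<omega> < 1 \<and> U \<omega> \<le> cdf \<nu> y)
        \<or> (\<not> (0 < U \<omega> \<and> U \<omega> < 1) \<and> 0 \<le> y)}"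
      by (simp add: W_le)
    also have "\<dots> \<in> events"
      by measurable
    finally show "{\<omega>\<in>space M. W \<omega> \<le> y} \<in> events" .
  qed
  have "prob {\<omega>\<in>space M. \<omega> \<in> Q \<and> W \<omega> \<le> y} = prob Q * cdf \<nu> y" for y
  proof -
    have "prob {\<omega>\<in>space M. \<omega> \<in> Q \<and> W \<omega> \<le> y} = prob {\<omega>\<in>space M. \<omega> \<in> Q \<and> U \<omega> \<le> cdf \<nu> y}"
      using U_01 W_measurable by (intro finite_measure_eq_AE) (auto simp: W_le)
    also have "\<dots> = prob Q * cdf \<nu> y"
      using \<nu>.cdf_nonneg \<nu>.cdf_bounded_prob by (simp add: U_uniform)
    finally show ?thesis .
  qed
  then show ?thesis
    using W_measurable by blast
qed

lemma prob_mult_cdf_conditional: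
  fixes X :: "'a \<Rightarrow> real"
  assumes R[measurable]: "R \<in> events" and "0 < prob R" and X[measurable]: "X \<in> borel_measurable M"
  shows "real_distribution (distr (uniform_measure M R) borel X)"
    "prob R * cdf (distr (uniform_measure M R) borel X) y = prob {\<omega>\<in>space M. \<omega> \<in> R \<and> X \<omega> \<le> y}"
proof -
  have R_pos: "emeasure M R \<noteq> 0" "emeasure M R \<noteq> \<infinity>"
    using \<open>0 < prob R\<close> by (simp_all add: emeasure_eq_measure)
  interpret R: prob_space "uniform_measure M R"
    by (rule prob_space_uniform_measure[OF R_pos])
  have X_R: "X \<in> borel_measurable (uniform_measure M R)"
    by simp
  show "real_distribution (distr (uniform_measure M R) borel X)"
    using X_R by (rule R.real_distribution_distr)
  have "cdf (distr (uniform_measure M R) borel X) y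
      = measure (uniform_measure M R) {\<omega>\<in>space M. X \<omega> \<le> y}"
    using X_R unfolding cdf_def by (simp add: measure_distr vimage_def Int_def conj_commute)
  also have "\<dots> = prob (R \<inter> {\<omega>\<in>space M. X \<omega> \<le> y}) / prob R"
    using R_pos by simp
  finally show "prob R * cdf (distr (uniform_measure M R) borel X) y
      = prob {\<omega>\<in>space M. \<omega> \<in> R \<and> X \<omega> \<le> y}"
    using \<open>0 < prob R\<close> sets.sets_into_space[OF R]
    by (auto simp: Int_def intro!: arg_cong[where f = prob])
qed

lemma nonatomic_realize_conditional_law:
  fixes X :: "'a \<Rightarrow> real"
  assumes na: "nonatomic M" and Q: "Q \<in> events" and R: "R \<in> events" and QR: "prob Q = prob R"
    and X: "X \<in> borel_measurable M"
  shows "\<exists>W\<in>borel_measurable M. \<forall>y.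
    prob {\<omega>\<in>space M. \<omega> \<in> Q \<and> W \<omega> \<le> y} = prob {\<omega>\<in>space M. \<omega> \<in> R \<and> X \<omega> \<le> y}"
proof (cases "prob R = 0")
  case True
  have "prob {\<omega>\<in>space M. \<omega> \<in> S \<and> X \<omega> \<le> y} = 0" if "S \<in> events" "prob S = 0" for S y
  proof -
    have "prob {\<omega>\<in>space M. \<omega> \<in> S \<and> X \<omega> \<le> y} \<le> prob S"
      using that by (intro finite_measure_mono) auto
    then show ?thesis
      using that by (simp add: measure_le_0_iff)
  qed
  then show ?thesis
    using True Q R QR X by auto
next
  case False
  then have pos: "0 < prob R"
    using measure_nonneg[of M R] by linarith
  obtain W where "W \<in> borel_measurable M"
    "\<And>y. prob {\<omega>\<in>space M. \<omega> \<in> Q \<and> W \<omega> \<le> y} = prob Q * cdf (distr (uniform_measure M R) borel X) y"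
    using nonatomic_realize_distribution[OF na Q prob_mult_cdf_conditional(1)[OF R pos X]] by blast
  then show ?thesis
    using prob_mult_cdf_conditional(2)[OF R pos X] QR by auto
qed

end

section \<open>Copies with a prescribed law\<close>

context prob_space
begin

lemma nonatomic_transport_event:
  fixes Z :: "'a \<Rightarrow> real"
  assumes na: "nonatomic M" and Z[measurable]: "Z \<in> borel_measurable M"
    and B[measurable]: "B \<in> events" and L[measurable]: "L \<in> events" and BL: "prob B = prob L"
  shows "\<exists>Z'\<in>borel_measurable M. distr M borel Z' = distr M borel Z
    \<and> (\<forall>y. prob {\<omega>\<in>space M. \<omega> \<in> B \<and> Z' \<omega> \<le> y} = prob {\<omega>\<in>space M. \<omega> \<in> L \<and> Z \<omega> \<le> y})
    \<and> (\<forall>y. prob {\<omega>\<in>space M. \<omega> \<notin> B \<and> Z' \<omega> \<le> y} = prob {\<omega>\<in>space M. \<omega> \<notin> L \<and> Z \<omega> \<le> y})"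
proof -
  obtain W1 where W1[measurable]: "W1 \<in> borel_measurable M"
    and W1_law: "\<And>y. prob {\<omega>\<in>space M. \<omega> \<in> B \<and> W1 \<omega> \<le> y} = prob {\<omega>\<in>space M. \<omega> \<in> L \<and> Z \<omega> \<le> y}"
    using nonatomic_realize_conditional_law[OF na B L BL Z] by blast
  have "prob (space M - B) = prob (space M - L)"
    using BL by (simp add: prob_compl)
  then obtain W2 where W2[measurable]: "W2 \<in> borel_measurable M"
    and W2_law: "\<And>y. prob {\<omega>\<in>space M. \<omega> \<in> space M - B \<and> W2 \<omega> \<le> y}
      = prob {\<omega>\<in>space M. \<omega> \<in> space M - L \<and> Z \<omega> \<le> y}"
    using nonatomic_realize_conditional_law[OF na _ _ _ Z, of "space M - B" "space M - L"] by auto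
  define Z' where "Z' \<omega> = (if \<omega> \<in> B then W1 \<omega> else W2 \<omega>)" for \<omega>
  have Z'[measurable]: "Z' \<in> borel_measurable M"
    unfolding Z'_def by measurable
  have on_B: "prob {\<omega>\<in>space M. \<omega> \<in> B \<and> Z' \<omega> \<le> y} = prob {\<omega>\<in>space M. \<omega> \<in> L \<and> Z \<omega> \<le> y}" for y
  proof -
    have "{\<omega>\<in>space M. \<omega> \<in> B \<and> Z' \<omega> \<le> y} = {\<omega>\<in>space M. \<omega> \<in> B \<and> W1 \<omega> \<le> y}"
      by (auto simp: Z'_def)
    then show ?thesis
      using W1_law by simp
  qed
  have off_B: "prob {\<omega>\<in>space M. \<omega> \<notin> B \<and> Z' \<omega> \<le> y} = prob {\<omega>\<in>space M. \<omega> \<notin> L \<and> Z \<omega> \<le> y}" for y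
  proof -
    have "{\<omega>\<in>space M. \<omega> \<notin> B \<and> Z' \<omega> \<le> y} = {\<omega>\<in>space M. \<omega> \<in> space M - B \<and> W2 \<omega> \<le> y}"
      "{\<omega>\<in>space M. \<omega> \<notin> L \<and> Z \<omega> \<le> y} = {\<omega>\<in>space M. \<omega> \<in> space M - L \<and> Z \<omega> \<le> y}"
      by (auto simp: Z'_def)
    then show ?thesis
      using W2_law by simp
  qed
  have "prob {\<omega>\<in>space M. Z' \<omega> \<le> y} = prob {\<omega>\<in>space M. Z \<omega> \<le> y}" for y
    using prob_split_by_event[OF B, of "\<lambda>\<omega>. Z' \<omega> \<le> y"] prob_split_by_event[OF L, of "\<lambda>\<omega>. Z \<omega> \<le> y"]
      on_B off_B by simp
  then show ?thesis
    using Z' on_B off_B distr_eq_of_prob_le_eq[OF Z' Z] by blast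
qed

lemma nonatomic_swap_events:
  fixes X :: "'a \<Rightarrow> real"
  assumes na: "nonatomic M" and X[measurable]: "X \<in> borel_measurable M"
    and C[measurable]: "C \<in> events" and D[measurable]: "D \<in> events"
    and disj: "C \<inter> D = {}" and CD: "prob C = prob D"
  shows "\<exists>X'\<in>borel_measurable M. distr M borel X' = distr M borel X
    \<and> (\<forall>\<omega>. \<omega> \<notin> C \<longrightarrow> \<omega> \<notin> D \<longrightarrow> X' \<omega> = X \<omega>)
    \<and> (\<forall>y. prob {\<omega>\<in>space M. \<omega> \<in> C \<and> X' \<omega> \<le> y} = prob {\<omega>\<in>space M. \<omega> \<in> D \<and> X \<omega> \<le> y})
    \<and> (\<forall>y. prob {\<omega>\<in>space M. \<omega> \<in> D \<and> X' \<omega> \<le> y} = prob {\<omega>\<in>space M. \<omega> \<in> C \<and> X \<omega> \<le> y})"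
proof -
  obtain W1 where W1[measurable]: "W1 \<in> borel_measurable M"
    and W1_law: "\<And>y. prob {\<omega>\<in>space M. \<omega> \<in> C \<and> W1 \<omega> \<le> y} = prob {\<omega>\<in>space M. \<omega> \<in> D \<and> X \<omega> \<le> y}"
    using nonatomic_realize_conditional_law[OF na C D CD X] by blast
  obtain W2 where W2[measurable]: "W2 \<in> borel_measurable M"
    and W2_law: "\<And>y. prob {\<omega>\<in>space M. \<omega> \<in> D \<and> W2 \<omega> \<le> y} = prob {\<omega>\<in>space M. \<omega> \<in> C \<and> X \<omega> \<le> y}"
    using nonatomic_realize_conditional_law[OF na D C CD[symmetric] X] by blast
  define X' where "X' \<omega> = (if \<omega> \<in> C then W1 \<omega> else if \<omega> \<in> D then W2 \<omega> else X \<omega>)" for \<omega>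
  have X'[measurable]: "X' \<in> borel_measurable M"
    unfolding X'_def by measurable
  have on_C: "{\<omega>\<in>space M. \<omega> \<in> C \<and> X' \<omega> \<le> y} = {\<omega>\<in>space M. \<omega> \<in> C \<and> W1 \<omega> \<le> y}" for y
    by (auto simp: X'_def)
  have on_D: "{\<omega>\<in>space M. \<omega> \<in> D \<and> X' \<omega> \<le> y} = {\<omega>\<in>space M. \<omega> \<in> D \<and> W2 \<omega> \<le> y}" for y
    using disj by (auto simp: X'_def)
  have "prob {\<omega>\<in>space M. U \<omega> \<le> y} = prob {\<omega>\<in>space M. \<omega> \<in> C \<and> U \<omega> \<le> y}
      + prob {\<omega>\<in>space M. \<omega> \<in> D \<and> U \<omega> \<le> y} + prob {\<omega>\<in>space M. \<omega> \<notin> C \<and> \<omega> \<notin> D \<and> U \<omega> \<le> y}"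
    if [measurable]: "U \<in> borel_measurable M" for U :: "'a \<Rightarrow> real" and y
  proof -
    have "{\<omega>\<in>space M. U \<omega> \<le> y} \<in> events" "{\<omega>\<in>space M. \<omega> \<notin> C \<and> U \<omega> \<le> y} \<in> events"
      by measurable
    note split = prob_split_by_event[OF C this(1)] prob_split_by_event[OF D this(2)]
    have "{\<omega>\<in>space M. \<omega> \<in> D \<and> \<omega> \<notin> C \<and> U \<omega> \<le> y} = {\<omega>\<in>space M. \<omega> \<in> D \<and> U \<omega> \<le> y}"
      "{\<omega>\<in>space M. \<omega> \<notin> D \<and> \<omega> \<notin> C \<and> U \<omega> \<le> y} = {\<omega>\<in>space M. \<omega> \<notin> C \<and> \<omega> \<notin> D \<and> U \<omega> \<le> y}"
      using disj by auto
    then show ?thesis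
      using split by simp
  qed
  moreover have "{\<omega>\<in>space M. \<omega> \<notin> C \<and> \<omega> \<notin> D \<and> X' \<omega> \<le> y}
      = {\<omega>\<in>space M. \<omega> \<notin> C \<and> \<omega> \<notin> D \<and> X \<omega> \<le> y}" for y
    by (auto simp: X'_def)
  ultimately have "prob {\<omega>\<in>space M. X' \<omega> \<le> y} = prob {\<omega>\<in>space M. X \<omega> \<le> y}" for y
    using W1_law W2_law by (simp add: on_C on_D)
  then have "distr M borel X' = distr M borel X"
    by (rule distr_eq_of_prob_le_eq[OF X' X])
  moreover have "\<forall>\<omega>. \<omega> \<notin> C \<longrightarrow> \<omega> \<notin> D \<longrightarrow> X' \<omega> = X \<omega>"
    by (simp add: X'_def)
  ultimately show ?thesis
    using X' by (intro bexI[of _ X']) (simp_all add: on_C on_D W1_law W2_law)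
qed

lemma nonatomic_exchange_events:
  assumes na: "nonatomic M" and A: "A \<in> events" and L: "L \<in> events"
    and pos: "0 < prob A" "0 < prob (space M - A)" "0 < prob L" "0 < prob (space M - L)"
  shows "\<exists>C\<in>events. \<exists>D\<in>events. \<exists>B\<in>events. C \<subseteq> A \<and> D \<subseteq> space M - A \<and> D \<subseteq> B
    \<and> C \<inter> B = {} \<and> 0 < prob C \<and> prob D = prob C \<and> prob B = prob L"
proof -
  define r where "r = min (min (prob L) (prob (space M - L))) (min (prob A) (prob (space M - A)))"
  have r: "0 < r" "r \<le> prob A" "r \<le> prob (space M - A)" "r \<le> prob L" "r \<le> 1 - prob L"
    using pos prob_compl[OF L] unfolding r_def by auto
  obtain C where C: "C \<in> events" "C \<subseteq> A" "prob C = r"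
    using nonatomic_subset_prob_eq[OF na A, of r] r by auto
  obtain D where D: "D \<in> events" "D \<subseteq> space M - A" "prob D = r"
    using nonatomic_subset_prob_eq[OF na sets.compl_sets[OF A], of r] r by auto
  have "C \<inter> D = {}"
    using C(2) D(2) by auto
  then have "prob (space M - (C \<union> D)) = 1 - 2 * r"
    using C D by (simp add: prob_compl finite_measure_Union)
  then obtain E where E: "E \<in> events" "E \<subseteq> space M - (C \<union> D)" "prob E = prob L - r"
    using nonatomic_subset_prob_eq[OF na sets.compl_sets[OF sets.Un[OF C(1) D(1)]], of "prob L - r"]
      r
    by auto
  have "prob (D \<union> E) = prob L"
    using D E by (subst finite_measure_Union) auto
  moreover have "C \<inter> (D \<union> E) = {}"
    using \<open>C \<inter> D = {}\<close> E(2) by auto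
  ultimately show ?thesis
    using C D E r(1) by (intro bexI[of _ C] bexI[of _ D] bexI[of _ "D \<union> E"]) auto
qed

lemma nonatomic_copy_below_on_event:
  fixes Z :: "'a \<Rightarrow> real"
  assumes na: "nonatomic M" and Z[measurable]: "Z \<in> borel_measurable M"
    and B[measurable]: "B \<in> events" and B_prob: "prob B = prob {\<omega>\<in>space M. Z \<omega> \<le> s}"
  shows "\<exists>Z'\<in>borel_measurable M. distr M borel Z' = distr M borel Z
    \<and> (AE \<omega> in M. \<omega> \<in> B \<longrightarrow> Z' \<omega> \<le> s) \<and> (AE \<omega> in M. \<omega> \<in> space M - B \<longrightarrow> s < Z' \<omega>)"
proof -
  define L where "L = {\<omega>\<in>space M. Z \<omega> \<le> s}"
  have L[measurable]: "L \<in> events"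
    unfolding L_def by measurable
  obtain Z' where Z'[measurable]: "Z' \<in> borel_measurable M"
    and law: "distr M borel Z' = distr M borel Z"
    and on_B: "\<And>y. prob {\<omega>\<in>space M. \<omega> \<in> B \<and> Z' \<omega> \<le> y} = prob {\<omega>\<in>space M. \<omega> \<in> L \<and> Z \<omega> \<le> y}"
    and off_B: "\<And>y. prob {\<omega>\<in>space M. \<omega> \<notin> B \<and> Z' \<omega> \<le> y} = prob {\<omega>\<in>space M. \<omega> \<notin> L \<and> Z \<omega> \<le> y}"
    using nonatomic_transport_event[OF na Z B L] B_prob unfolding L_def by blast
  have B_L: "prob B = prob L"
    using B_prob unfolding L_def .
  have sets: "{\<omega>\<in>space M. \<omega> \<in> L \<and> Z \<omega> \<le> s} = L" "{\<omega>\<in>space M. \<omega> \<notin> L \<and> Z \<omega> \<le> s} = {}"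
    "{\<omega>\<in>space M. \<omega> \<in> space M - B \<and> Z' \<omega> \<le> s} = {\<omega>\<in>space M. \<omega> \<notin> B \<and> Z' \<omega> \<le> s}"
    unfolding L_def by auto
  have "prob {\<omega>\<in>space M. \<omega> \<in> B \<and> Z' \<omega> \<le> s} = prob B"
    "prob {\<omega>\<in>space M. \<omega> \<in> space M - B \<and> Z' \<omega> \<le> s} = 0"
    using on_B[of s] off_B[of s] B_L by (simp_all only: sets measure_empty)
  then have "AE \<omega> in M. \<omega> \<in> B \<longrightarrow> Z' \<omega> \<le> s" "AE \<omega> in M. \<omega> \<in> space M - B \<longrightarrow> s < Z' \<omega>"
    using prob_le_eq_prob_iff_AE[OF B Z'] prob_le_eq_0_iff_AE[OF _ Z', of "space M - B"] by auto
  then show ?thesis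
    using Z' law by blast
qed

text \<open>\<open>Z\<^sub>1\<close> is small exactly on an event \<open>B\<close> that contains \<open>D \<subseteq> -A\<close> and misses \<open>C \<subseteq> A\<close>;
  \<open>Z\<^sub>2\<close> is \<open>Z\<^sub>1\<close> with its values on \<open>C\<close> and \<open>D\<close> exchanged in law.\<close>

lemma nonatomic_ordered_copies:
  fixes Z :: "'a \<Rightarrow> real"
  assumes na: "nonatomic M" and Z[measurable]: "Z \<in> borel_measurable M"
    and A[measurable]: "A \<in> events" and A_pos: "0 < prob A" "0 < prob (space M - A)"
    and Z_pos: "0 < prob {\<omega>\<in>space M. Z \<omega> \<le> s}" "0 < prob {\<omega>\<in>space M. s < Z \<omega>}"
  shows "\<exists>Z1\<in>borel_measurable M. \<exists>Z2\<in>borel_measurable M. \<exists>C\<in>events.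
    distr M borel Z1 = distr M borel Z \<and> distr M borel Z2 = distr M borel Z \<and> C \<subseteq> A \<and> 0 < prob C
    \<and> (AE \<omega> in M. (\<omega> \<in> A \<longrightarrow> Z2 \<omega> \<le> Z1 \<omega>) \<and> (\<omega> \<notin> A \<longrightarrow> Z1 \<omega> \<le> Z2 \<omega>)
                 \<and> (\<omega> \<in> C \<longrightarrow> Z2 \<omega> < Z1 \<omega>))"
proof -
  have L: "{\<omega>\<in>space M. Z \<omega> \<le> s} \<in> events"
    by measurable
  have "space M - {\<omega>\<in>space M. Z \<omega> \<le> s} = {\<omega>\<in>space M. s < Z \<omega>}"
    by auto
  then obtain C D B where [measurable]: "C \<in> events" "D \<in> events" "B \<in> events"
    and CDB: "C \<subseteq> A" "D \<subseteq> space M - A" "D \<subseteq> B" "C \<inter> B = {}"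
    and prob_CDB: "0 < prob C" "prob D = prob C" "prob B = prob {\<omega>\<in>space M. Z \<omega> \<le> s}"
    using nonatomic_exchange_events[OF na A L A_pos] Z_pos by auto
  obtain Z1 where Z1[measurable]: "Z1 \<in> borel_measurable M"
    and Z1_law: "distr M borel Z1 = distr M borel Z"
    and small_on_B: "AE \<omega> in M. \<omega> \<in> B \<longrightarrow> Z1 \<omega> \<le> s"
    and large_off_B: "AE \<omega> in M. \<omega> \<in> space M - B \<longrightarrow> s < Z1 \<omega>"
    using nonatomic_copy_below_on_event[OF na Z _ prob_CDB(3)] by auto
  have CD: "C \<inter> D = {}"
    using CDB by auto
  obtain Z2 where Z2[measurable]: "Z2 \<in> borel_measurable M"
    and Z2_law: "distr M borel Z2 = distr M borel Z1"
    and Z2_eq: "\<And>\<omega>. \<omega> \<notin> C \<Longrightarrow> \<omega> \<notin> D \<Longrightarrow> Z2 \<omega> = Z1 \<omega>"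
    and Z2_C: "\<And>y. prob {\<omega>\<in>space M. \<omega> \<in> C \<and> Z2 \<omega> \<le> y} = prob {\<omega>\<in>space M. \<omega> \<in> D \<and> Z1 \<omega> \<le> y}"
    and Z2_D: "\<And>y. prob {\<omega>\<in>space M. \<omega> \<in> D \<and> Z2 \<omega> \<le> y} = prob {\<omega>\<in>space M. \<omega> \<in> C \<and> Z1 \<omega> \<le> y}"
    using nonatomic_swap_events[OF na Z1 _ _ CD] prob_CDB(2) by auto
  have C_off_B: "\<omega> \<in> C \<Longrightarrow> \<omega> \<in> space M - B" for \<omega>
    using sets.sets_into_space[OF \<open>C \<in> events\<close>] CDB(4) by auto
  have "AE \<omega> in M. \<omega> \<in> D \<longrightarrow> Z1 \<omega> \<le> s"
    using small_on_B by eventually_elim (use CDB(3) in auto)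
  then have small_on_C: "AE \<omega> in M. \<omega> \<in> C \<longrightarrow> Z2 \<omega> \<le> s"
    unfolding prob_le_eq_prob_iff_AE[OF \<open>C \<in> events\<close> Z2, symmetric]
      prob_le_eq_prob_iff_AE[OF \<open>D \<in> events\<close> Z1, symmetric] Z2_C
    using prob_CDB(2) by simp
  have "AE \<omega> in M. \<omega> \<in> C \<longrightarrow> s < Z1 \<omega>"
    using large_off_B by eventually_elim (use C_off_B in auto)
  then have large_on_D: "AE \<omega> in M. \<omega> \<in> D \<longrightarrow> s < Z2 \<omega>"
    unfolding prob_le_eq_0_iff_AE[OF \<open>D \<in> events\<close> Z2, symmetric]
      prob_le_eq_0_iff_AE[OF \<open>C \<in> events\<close> Z1, symmetric] Z2_D .
  have "AE \<omega> in M. (\<omega> \<in> A \<longrightarrow> Z2 \<omega> \<le> Z1 \<omega>) \<and> (\<omega> \<notin> A \<longrightarrow> Z1 \<omega> \<le> Z2 \<omega>) \<and> (\<omega> \<in> C \<longrightarrow> Z2 \<omega> < Z1 \<omega>)"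
    using small_on_B large_off_B small_on_C large_on_D
  proof eventually_elim
    case (elim \<omega>)
    have "\<omega> \<in> C \<Longrightarrow> \<omega> \<in> A" "\<omega> \<in> D \<Longrightarrow> \<omega> \<notin> A \<and> \<omega> \<in> B"
      using CDB by auto
    then show ?case
      using elim Z2_eq[of \<omega>] C_off_B[of \<omega>] by (cases "\<omega> \<in> C"; cases "\<omega> \<in> D") force+
  qed
  moreover have "distr M borel Z2 = distr M borel Z"
    using Z1_law Z2_law by simp
  ultimately show ?thesis
    using Z1 Z2 Z1_law CDB(1) prob_CDB(1) \<open>C \<in> events\<close> by blast
qed

lemma prob_expectation_less_pos:
  fixes f :: "'a \<Rightarrow> real"
  assumes f: "integrable M f" and nonconst: "\<not> (\<exists>c. AE \<omega> in M. f \<omega> = c)"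
  shows "0 < prob {\<omega>\<in>space M. expectation f < f \<omega>}"
proof (rule ccontr)
  assume "\<not> ?thesis"
  moreover have [measurable]: "f \<in> borel_measurable M"
    using f by auto
  ultimately have "AE \<omega> in M. \<not> expectation f < f \<omega>"
    using measure_nonneg[of M "{\<omega>\<in>space M. expectation f < f \<omega>}"]
    by (subst prob_Collect_eq_0[symmetric]) auto
  then have nonneg: "AE \<omega> in M. 0 \<le> expectation f - f \<omega>"
    by eventually_elim simp
  have "integral\<^sup>L M (\<lambda>\<omega>. expectation f - f \<omega>) = 0"
    using f by (simp add: prob_space)
  then have "AE \<omega> in M. expectation f - f \<omega> = 0"
    using integral_nonneg_eq_0_iff_AE[OF _ nonneg] f by simp
  then have "AE \<omega> in M. f \<omega> = expectation f"
    by eventually_elim simp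
  then show False
    using nonconst by blast
qed

lemma nonconstant_split_at_expectation:
  fixes f :: "'a \<Rightarrow> real"
  assumes f: "integrable M f" and nonconst: "\<not> (\<exists>c. AE \<omega> in M. f \<omega> = c)"
  shows "0 < prob {\<omega>\<in>space M. f \<omega> \<le> expectation f}" "0 < prob {\<omega>\<in>space M. expectation f < f \<omega>}"
proof -
  show "0 < prob {\<omega>\<in>space M. expectation f < f \<omega>}"
    by (rule prob_expectation_less_pos[OF f nonconst])
  have "\<not> (\<exists>c. AE \<omega> in M. - f \<omega> = c)"
  proof
    assume "\<exists>c. AE \<omega> in M. - f \<omega> = c"
    then obtain c where "AE \<omega> in M. - f \<omega> = c" ..
    then have "AE \<omega> in M. f \<omega> = - c"
      by eventually_elim auto
    then show False
      using nonconst by blast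
  qed
  then have "0 < prob {\<omega>\<in>space M. f \<omega> < expectation f}"
    using prob_expectation_less_pos[of "\<lambda>\<omega>. - f \<omega>"] f by simp
  also have "\<dots> \<le> prob {\<omega>\<in>space M. f \<omega> \<le> expectation f}"
    using f by (intro finite_measure_mono) auto
  finally show "0 < prob {\<omega>\<in>space M. f \<omega> \<le> expectation f}" .
qed

lemma integral_pos_if_AE_pos_on_event:
  fixes h :: "'a \<Rightarrow> real"
  assumes h: "integrable M h" and nonneg: "AE \<omega> in M. 0 \<le> h \<omega>"
    and C: "C \<in> events" "0 < prob C" and pos: "AE \<omega> in M. \<omega> \<in> C \<longrightarrow> 0 < h \<omega>"
  shows "0 < integral\<^sup>L M h"
proof -
  have "integral\<^sup>L M h \<noteq> 0"
  proof
    assume "integral\<^sup>L M h = 0"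
    then have "AE \<omega> in M. h \<omega> = 0"
      using integral_nonneg_eq_0_iff_AE[OF h nonneg] by simp
    with pos have "AE \<omega> in M. \<omega> \<notin> C"
      by eventually_elim auto
    then have "prob C = 0"
      using C(1) by (simp add: prob_eq_0 sets.sets_into_space)
    then show False
      using C(2) by simp
  qed
  then show ?thesis
    using integral_nonneg_AE[OF nonneg] by simp
qed

lemma expectation_eq_if_distr_eq:
  fixes X Y :: "'a \<Rightarrow> real"
  assumes "X \<in> borel_measurable M" "Y \<in> borel_measurable M" "distr M borel X = distr M borel Y"
  shows "expectation X = expectation Y"
  using integral_distr[OF assms(1), of "\<lambda>x. x"] integral_distr[OF assms(2), of "\<lambda>x. x"] assms(3)
  by simp

lemma integral_mult_less_if_ordered:
  fixes Y Z1 Z2 :: "'a \<Rightarrow> real"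
  assumes integrable: "integrable M Z1" "integrable M Z2"
      "integrable M (\<lambda>\<omega>. Z1 \<omega> * Y \<omega>)" "integrable M (\<lambda>\<omega>. Z2 \<omega> * Y \<omega>)"
    and same_mean: "expectation Z1 = expectation Z2"
    and C: "C \<in> events" "0 < prob C" "C \<subseteq> {\<omega>\<in>space M. t < Y \<omega>}"
    and ordered: "AE \<omega> in M. (t < Y \<omega> \<longrightarrow> Z2 \<omega> \<le> Z1 \<omega>) \<and> (Y \<omega> \<le> t \<longrightarrow> Z1 \<omega> \<le> Z2 \<omega>)
      \<and> (\<omega> \<in> C \<longrightarrow> Z2 \<omega> < Z1 \<omega>)"
  shows "(\<integral>\<omega>. Z2 \<omega> * Y \<omega> \<partial>M) < (\<integral>\<omega>. Z1 \<omega> * Y \<omega> \<partial>M)"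
proof -
  define h where "h \<omega> = Z1 \<omega> * Y \<omega> - Z2 \<omega> * Y \<omega> - t * (Z1 \<omega> - Z2 \<omega>)" for \<omega>
  have h_eq: "h \<omega> = (Z1 \<omega> - Z2 \<omega>) * (Y \<omega> - t)" for \<omega>
    by (simp add: h_def algebra_simps)
  have "AE \<omega> in M. 0 \<le> h \<omega> \<and> (\<omega> \<in> C \<longrightarrow> 0 < h \<omega>)"
    using ordered
  proof eventually_elim
    case (elim \<omega>)
    show ?case
    proof (cases "t < Y \<omega>")
      case True
      then show ?thesis
        using elim by (simp add: h_eq)
    next
      case False
      then have "\<omega> \<notin> C" "Y \<omega> - t \<le> 0" "Z1 \<omega> - Z2 \<omega> \<le> 0"
        using elim C(3) by auto
      then show ?thesis
        by (simp add: h_eq mult_nonpos_nonpos)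
    qed
  qed
  then have "AE \<omega> in M. 0 \<le> h \<omega>" "AE \<omega> in M. \<omega> \<in> C \<longrightarrow> 0 < h \<omega>"
    by (auto elim: eventually_mono)
  moreover have "integrable M h"
    unfolding h_def using integrable by auto
  ultimately have "0 < integral\<^sup>L M h"
    using integral_pos_if_AE_pos_on_event C(1,2) by blast
  then show ?thesis
    unfolding h_def using integrable same_mean by simp
qed

text \<open>If \<open>Y\<close> is not constant, two copies of \<open>Z\<close> ordered along \<open>{Y > E Y}\<close> have
  different pairings with \<open>Y\<close>.\<close>

lemma AE_const_if_law_class_pairing_const:
  fixes Y Z :: "'a \<Rightarrow> real" and \<X> :: "('a \<Rightarrow> real) set"
  assumes na: "nonatomic M" and law_inv: "law_invariant M \<X>"
    and integrable: "\<And>X. X \<in> \<X> \<Longrightarrow> integrable M X"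
    and integrable_mult: "\<And>X. X \<in> \<X> \<Longrightarrow> integrable M (\<lambda>\<omega>. X \<omega> * Y \<omega>)"
    and Y: "integrable M Y" and Z: "Z \<in> \<X>" and Z_nonconst: "\<not> (\<exists>c. AE \<omega> in M. Z \<omega> = c)"
    and pairing_const: "\<And>Z1 Z2. Z1 \<in> law_class M \<X> Z \<Longrightarrow> Z2 \<in> law_class M \<X> Z \<Longrightarrow>
      (\<integral>\<omega>. Z1 \<omega> * Y \<omega> \<partial>M) = (\<integral>\<omega>. Z2 \<omega> * Y \<omega> \<partial>M)"
  shows "\<exists>c. AE \<omega> in M. Y \<omega> = c"
proof (rule ccontr)
  assume Y_nonconst: "\<not> ?thesis"
  have [measurable]: "Y \<in> borel_measurable M" "Z \<in> borel_measurable M"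
    using Y integrable[OF Z] by auto
  define A where "A = {\<omega>\<in>space M. expectation Y < Y \<omega>}"
  have A[measurable]: "A \<in> events"
    unfolding A_def by measurable
  have "space M - A = {\<omega>\<in>space M. Y \<omega> \<le> expectation Y}"
    unfolding A_def by auto
  then have A_pos: "0 < prob A" "0 < prob (space M - A)"
    using nonconstant_split_at_expectation[OF Y Y_nonconst] unfolding A_def by simp_all
  obtain Z1 Z2 C where Z1[measurable]: "Z1 \<in> borel_measurable M"
    and Z2[measurable]: "Z2 \<in> borel_measurable M"
    and C: "C \<in> events" "C \<subseteq> A" "0 < prob C"
    and laws: "distr M borel Z1 = distr M borel Z" "distr M borel Z2 = distr M borel Z"
    and ordered: "AE \<omega> in M. (\<omega> \<in> A \<longrightarrow> Z2 \<omega> \<le> Z1 \<omega>) \<and> (\<omega> \<notin> A \<longrightarrow> Z1 \<omega> \<le> Z2 \<omega>)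
      \<and> (\<omega> \<in> C \<longrightarrow> Z2 \<omega> < Z1 \<omega>)"
    using nonatomic_ordered_copies[OF na _ A A_pos
        nonconstant_split_at_expectation[OF integrable[OF Z] Z_nonconst]]
    by auto
  have Z12: "Z1 \<in> \<X>" "Z2 \<in> \<X>"
    using law_inv[unfolded law_invariant_def, rule_format, OF _ Z] Z1 Z2 laws by blast+
  then have law_class: "Z1 \<in> law_class M \<X> Z" "Z2 \<in> law_class M \<X> Z"
    using laws unfolding law_class_def by blast+
  have "AE \<omega> in M. (expectation Y < Y \<omega> \<longrightarrow> Z2 \<omega> \<le> Z1 \<omega>) \<and> (Y \<omega> \<le> expectation Y \<longrightarrow> Z1 \<omega> \<le> Z2 \<omega>)
      \<and> (\<omega> \<in> C \<longrightarrow> Z2 \<omega> < Z1 \<omega>)"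
    using ordered AE_space by eventually_elim (auto simp: A_def)
  moreover have "expectation Z1 = expectation Z2"
    using expectation_eq_if_distr_eq[OF Z1 Z2] laws by simp
  ultimately have "(\<integral>\<omega>. Z2 \<omega> * Y \<omega> \<partial>M) < (\<integral>\<omega>. Z1 \<omega> * Y \<omega> \<partial>M)"
    using C Z12 integrable integrable_mult unfolding A_def
    by (intro integral_mult_less_if_ordered) auto
  then show False
    using pairing_const[OF law_class] by simp
qed

end

section \<open>Dual pairings and weak topologies\<close>

lemma fun_subspaceD:
  assumes "fun_subspace S"
  shows fun_subspace_zero: "(\<lambda>_. 0) \<in> S"
    and fun_subspace_add: "X \<in> S \<Longrightarrow> W \<in> S \<Longrightarrow> (\<lambda>\<omega>. X \<omega> + W \<omega>) \<in> S"
    and fun_subspace_scale: "X \<in> S \<Longrightarrow> (\<lambda>\<omega>. c * X \<omega>) \<in> S"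
    and fun_subspace_diff_scale: "X \<in> S \<Longrightarrow> W \<in> S \<Longrightarrow> (\<lambda>\<omega>. X \<omega> - c * W \<omega>) \<in> S"
proof -
  show zero: "(\<lambda>_. 0) \<in> S" and add: "\<And>X W. X \<in> S \<Longrightarrow> W \<in> S \<Longrightarrow> (\<lambda>\<omega>. X \<omega> + W \<omega>) \<in> S"
    and scale: "\<And>X c. X \<in> S \<Longrightarrow> (\<lambda>\<omega>. c * X \<omega>) \<in> S"
    using assms unfolding fun_subspace_def by blast+
  show "X \<in> S \<Longrightarrow> W \<in> S \<Longrightarrow> (\<lambda>\<omega>. X \<omega> - c * W \<omega>) \<in> S"
    using add[OF _ scale[of W "- c"]] by simp
qed

lemma fun_subspace_fun_span: "fun_subspace (fun_span A)"
proof -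
  have "(\<lambda>_. 0) \<in> fun_span A"
    unfolding fun_span_def by (intro CollectI exI[of _ 0]) auto
  moreover have "(\<lambda>\<omega>. X \<omega> + W \<omega>) \<in> fun_span A"
    if XA: "X \<in> fun_span A" and WA: "W \<in> fun_span A" for X W
  proof -
    obtain n :: nat and c g where g: "\<forall>i<n. g i \<in> A" and X: "X = (\<lambda>\<omega>. \<Sum>i<n. c i * g i \<omega>)"
      using XA unfolding fun_span_def by blast
    obtain m :: nat and d h where h: "\<forall>i<m. h i \<in> A" and W: "W = (\<lambda>\<omega>. \<Sum>i<m. d i * h i \<omega>)"
      using WA unfolding fun_span_def by blast
    define c' where "c' i = (if i < n then c i else d (i - n))" for i
    define g' where "g' i = (if i < n then g i else h (i - n))" for i
    have sum_split: "(\<Sum>i<n + k. f i) = (\<Sum>i<n. f i) + (\<Sum>i<k. f (n + i))" for f :: "nat \<Rightarrow> real" and k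
      by (induction k) (simp_all add: add.assoc)
    have "(\<Sum>i<n + m. c' i * g' i \<omega>) = (\<Sum>i<n. c i * g i \<omega>) + (\<Sum>i<m. d i * h i \<omega>)" for \<omega>
      unfolding sum_split by (simp add: c'_def g'_def)
    moreover have "\<forall>i<n + m. g' i \<in> A"
      using g h by (auto simp: g'_def)
    ultimately show ?thesis
      unfolding fun_span_def X W by (intro CollectI exI[of _ "n + m"] exI[of _ c'] exI[of _ g']) auto
  qed
  moreover have "(\<lambda>\<omega>. k * X \<omega>) \<in> fun_span A" if XA: "X \<in> fun_span A" for k X
  proof -
    obtain n :: nat and c g where g: "\<forall>i<n. g i \<in> A" and X: "X = (\<lambda>\<omega>. \<Sum>i<n. c i * g i \<omega>)"
      using XA unfolding fun_span_def by blast
    have "(\<lambda>\<omega>. k * X \<omega>) = (\<lambda>\<omega>. \<Sum>i<n. (k * c i) * g i \<omega>)"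
      unfolding X by (simp add: sum_distrib_left mult.assoc)
    then show ?thesis
      unfolding fun_span_def using g
      by (intro CollectI exI[of _ n] exI[of _ "\<lambda>i. k * c i"] exI[of _ g]) simp
  qed
  ultimately show ?thesis
    unfolding fun_subspace_def by blast
qed

lemma fun_span_superset: "A \<subseteq> fun_span A"
  unfolding fun_span_def by (force intro: exI[of _ 1] exI[of _ "\<lambda>_. 1"])

lemma fun_span_least:
  assumes "A \<subseteq> S" "fun_subspace S"
  shows "fun_span A \<subseteq> S"
proof
  fix X assume "X \<in> fun_span A"
  then obtain n :: nat and c g where g: "\<forall>i<n. g i \<in> A" and X: "X = (\<lambda>\<omega>. \<Sum>i<n. c i * g i \<omega>)"
    unfolding fun_span_def by blast
  have "(\<lambda>\<omega>. \<Sum>i<m. c i * g i \<omega>) \<in> S" if "m \<le> n" for m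
    using that
  proof (induction m)
    case 0
    then show ?case
      using fun_subspace_zero[OF assms(2)] by simp
  next
    case (Suc m)
    then have "(\<lambda>\<omega>. (\<Sum>i<m. c i * g i \<omega>) + c m * g m \<omega>) \<in> S"
      using g assms by (intro fun_subspace_add fun_subspace_scale) auto
    then show ?case
      by simp
  qed
  then show "X \<in> S"
    unfolding X by simp
qed

locale dual_pairing =
  fixes V Vd :: "('a \<Rightarrow> real) set" and pair :: "('a \<Rightarrow> real) \<Rightarrow> ('a \<Rightarrow> real) \<Rightarrow> real"
  assumes subspace_V: "fun_subspace V" and subspace_Vd: "fun_subspace Vd"
    and pair_add: "X \<in> V \<Longrightarrow> W \<in> V \<Longrightarrow> Y \<in> Vd \<Longrightarrow> pair (\<lambda>\<omega>. X \<omega> + W \<omega>) Y = pair X Y + pair W Y"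
    and pair_scale: "X \<in> V \<Longrightarrow> Y \<in> Vd \<Longrightarrow> pair (\<lambda>\<omega>. c * X \<omega>) Y = c * pair X Y"
    and pair_add_right: "X \<in> V \<Longrightarrow> Y \<in> Vd \<Longrightarrow> Y' \<in> Vd \<Longrightarrow>
      pair X (\<lambda>\<omega>. Y \<omega> + Y' \<omega>) = pair X Y + pair X Y'"
    and pair_scale_right: "X \<in> V \<Longrightarrow> Y \<in> Vd \<Longrightarrow> pair X (\<lambda>\<omega>. c * Y \<omega>) = c * pair X Y"
begin

lemma pair_diff_scale:
  "X \<in> V \<Longrightarrow> W \<in> V \<Longrightarrow> Y \<in> Vd \<Longrightarrow> pair (\<lambda>\<omega>. X \<omega> - c * W \<omega>) Y = pair X Y - c * pair W Y"
  using pair_add[OF _ fun_subspace_scale[OF subspace_V], of X W Y "- c"] pair_scale[of W Y "- c"]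
  by simp

lemma pair_diff_scale_right:
  "X \<in> V \<Longrightarrow> Y \<in> Vd \<Longrightarrow> Y' \<in> Vd \<Longrightarrow> pair X (\<lambda>\<omega>. Y \<omega> - c * Y' \<omega>) = pair X Y - c * pair X Y'"
  using pair_add_right[OF _ _ fun_subspace_scale[OF subspace_Vd], of X Y Y' "- c"]
    pair_scale_right[of X Y' "- c"] by simp

lemma pair_zero: "Y \<in> Vd \<Longrightarrow> pair (\<lambda>_. 0) Y = 0"
  using pair_scale[OF fun_subspace_zero[OF subspace_V], of Y 0] by simp

lemma fun_subspace_kernel:
  assumes "fun_subspace S" "S \<subseteq> V" "Y \<in> Vd"
  shows "fun_subspace {X\<in>S. pair X Y = 0}"
proof -
  have "(\<lambda>\<omega>. X \<omega> + W \<omega>) \<in> {X\<in>S. pair X Y = 0}"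
    if "X \<in> {X\<in>S. pair X Y = 0}" "W \<in> {X\<in>S. pair X Y = 0}" for X W
    using that assms fun_subspace_add[OF assms(1)] pair_add[of X W Y] by auto
  moreover have "(\<lambda>\<omega>. c * X \<omega>) \<in> {X\<in>S. pair X Y = 0}" if "X \<in> {X\<in>S. pair X Y = 0}" for c X
    using that assms fun_subspace_scale[OF assms(1)] pair_scale[of X Y c] by auto
  ultimately show ?thesis
    using fun_subspace_zero[OF assms(1)] pair_zero[OF assms(3)] unfolding fun_subspace_def by blast
qed

text \<open>If \<open>Y\<close> vanishes on \<open>S \<inter> ker Y\<^sub>0\<close>, then \<open>Y - c Y\<^sub>0\<close> vanishes on \<open>S\<close> for a
  suitable \<open>c\<close>.\<close>

lemma annihilator_kernel:
  assumes S: "fun_subspace S" "S \<subseteq> G" "G \<subseteq> V"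
    and annihilator: "\<And>Y. Y \<in> Vd \<Longrightarrow> \<forall>W\<in>S. pair W Y = 0 \<Longrightarrow> \<forall>X\<in>G. pair X Y = 0"
    and Y0: "Y0 \<in> Vd" and w: "w \<in> S" "pair w Y0 \<noteq> 0"
    and Y: "Y \<in> Vd" "\<forall>W\<in>{W\<in>S. pair W Y0 = 0}. pair W Y = 0"
  shows "\<forall>X\<in>{X\<in>G. pair X Y0 = 0}. pair X Y = 0"
proof -
  define c where "c = pair w Y / pair w Y0"
  have "pair W (\<lambda>\<omega>. Y \<omega> - c * Y0 \<omega>) = 0" if W: "W \<in> S" for W
  proof -
    define k where "k = pair W Y0 / pair w Y0"
    have "W \<in> V" "w \<in> V"
      using S W w by auto
    have "(\<lambda>\<omega>. W \<omega> - k * w \<omega>) \<in> S"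
      using fun_subspace_diff_scale[OF S(1) W w(1)] .
    moreover have "k * pair w Y0 = pair W Y0"
      using w(2) by (simp add: k_def)
    then have "pair (\<lambda>\<omega>. W \<omega> - k * w \<omega>) Y0 = 0"
      using pair_diff_scale[OF \<open>W \<in> V\<close> \<open>w \<in> V\<close> Y0] by simp
    ultimately have "pair (\<lambda>\<omega>. W \<omega> - k * w \<omega>) Y = 0"
      using Y(2) by blast
    then have "pair W Y = k * pair w Y"
      using pair_diff_scale[OF \<open>W \<in> V\<close> \<open>w \<in> V\<close> Y(1)] by simp
    moreover have "c * pair W Y0 = k * pair w Y"
      unfolding c_def k_def by simp
    ultimately show ?thesis
      using pair_diff_scale_right[OF \<open>W \<in> V\<close> Y(1) Y0] by simp
  qed
  then have "\<forall>X\<in>G. pair X (\<lambda>\<omega>. Y \<omega> - c * Y0 \<omega>) = 0"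
    using annihilator fun_subspace_diff_scale[OF subspace_Vd Y(1) Y0] by blast
  show ?thesis
  proof
    fix X assume "X \<in> {X\<in>G. pair X Y0 = 0}"
    then have "X \<in> G" "X \<in> V" "pair X Y0 = 0"
      using S(3) by auto
    then show "pair X Y = 0"
      using pair_diff_scale_right[OF \<open>X \<in> V\<close> Y(1) Y0, of c] \<open>\<forall>X\<in>G. _\<close> by simp
  qed
qed

lemma decompose_along_functional:
  assumes S: "fun_subspace S" "S \<subseteq> G" and G: "fun_subspace G" "G \<subseteq> V"
    and Y0: "Y0 \<in> Vd" and w: "w \<in> S" "pair w Y0 \<noteq> 0" and X: "X \<in> G"
  shows "\<exists>W0\<in>S. (\<lambda>\<omega>. X \<omega> - W0 \<omega>) \<in> {X\<in>G. pair X Y0 = 0}"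
proof -
  define a where "a = pair X Y0 / pair w Y0"
  have "w \<in> V" "X \<in> V" "(\<lambda>\<omega>. a * w \<omega>) \<in> S"
    using w(1) X S G fun_subspace_scale[OF S(1) w(1)] by auto
  moreover have "a * pair w Y0 = pair X Y0"
    using w(2) by (simp add: a_def)
  ultimately have "pair (\<lambda>\<omega>. X \<omega> - 1 * (a * w \<omega>)) Y0 = 0"
    using pair_diff_scale[of X "\<lambda>\<omega>. a * w \<omega>" Y0 1] pair_scale[of w Y0 a] Y0 S G by auto
  moreover have "(\<lambda>\<omega>. X \<omega> - 1 * (a * w \<omega>)) \<in> G"
    using fun_subspace_diff_scale[OF G(1) X] \<open>(\<lambda>\<omega>. a * w \<omega>) \<in> S\<close> S(2) by blast
  ultimately show ?thesis
    using \<open>(\<lambda>\<omega>. a * w \<omega>) \<in> S\<close> by (intro bexI[of _ "\<lambda>\<omega>. a * w \<omega>"]) auto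
qed

lemma finite_interpolation:
  assumes "finite F" "F \<subseteq> Vd"
    and "fun_subspace S" "fun_subspace G" "S \<subseteq> G" "G \<subseteq> V"
    and "\<And>Y. Y \<in> Vd \<Longrightarrow> \<forall>W\<in>S. pair W Y = 0 \<Longrightarrow> \<forall>X\<in>G. pair X Y = 0"
    and "X \<in> G"
  shows "\<exists>W\<in>S. \<forall>Y\<in>F. pair W Y = pair X Y"
  using assms
proof (induction F arbitrary: S G X rule: finite_induct)
  case empty
  then show ?case
    using fun_subspace_zero[of S] by blast
next
  case (insert Y0 F)
  have Y0: "Y0 \<in> Vd"
    using insert.prems(1) by simp
  show ?case
  proof (cases "\<exists>w\<in>S. pair w Y0 \<noteq> 0")
    case False
    then have "pair X Y0 = 0"
      using insert.prems(6,7) Y0 by blast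
    moreover obtain W where "W \<in> S" "\<forall>Y\<in>F. pair W Y = pair X Y"
      using insert.IH[OF _ insert.prems(2-7)] insert.prems(1) by blast
    ultimately show ?thesis
      using False by auto
  next
    case True
    then obtain w where w: "w \<in> S" "pair w Y0 \<noteq> 0" ..
    obtain W0 where W0: "W0 \<in> S" and R: "(\<lambda>\<omega>. X \<omega> - W0 \<omega>) \<in> {X\<in>G. pair X Y0 = 0}"
      using decompose_along_functional[OF insert.prems(2,4,3,5) Y0 w insert.prems(7)] ..
    have kernels: "fun_subspace {W\<in>S. pair W Y0 = 0}" "fun_subspace {X\<in>G. pair X Y0 = 0}"
      "{W\<in>S. pair W Y0 = 0} \<subseteq> {X\<in>G. pair X Y0 = 0}" "{X\<in>G. pair X Y0 = 0} \<subseteq> V"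
      using fun_subspace_kernel[OF insert.prems(2) _ Y0] fun_subspace_kernel[OF insert.prems(3) _ Y0]
        insert.prems(4,5) by auto
    obtain W1 where W1: "W1 \<in> {W\<in>S. pair W Y0 = 0}" "\<forall>Y\<in>F. pair W1 Y = pair (\<lambda>\<omega>. X \<omega> - W0 \<omega>) Y"
      using insert.IH[OF _ kernels annihilator_kernel[OF insert.prems(2,4,5,6) Y0 w] R]
        insert.prems(1) by blast
    have "W0 \<in> V" "W1 \<in> V" "X \<in> V"
      using W0 W1(1) insert.prems(4,5,7) by auto
    have "pair (\<lambda>\<omega>. W0 \<omega> + W1 \<omega>) Y = pair X Y" if "Y \<in> insert Y0 F" for Y
    proof -
      have "Y \<in> Vd"
        using that insert.prems(1) by auto
      then have "pair (\<lambda>\<omega>. W0 \<omega> + W1 \<omega>) Y = pair W0 Y + pair W1 Y"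
        "pair (\<lambda>\<omega>. X \<omega> - W0 \<omega>) Y = pair X Y - pair W0 Y"
        using pair_add[OF \<open>W0 \<in> V\<close> \<open>W1 \<in> V\<close>] pair_diff_scale[OF \<open>X \<in> V\<close> \<open>W0 \<in> V\<close>, of Y 1] by simp_all
      then show ?thesis
        using that W1 R by auto
    qed
    moreover have "(\<lambda>\<omega>. W0 \<omega> + W1 \<omega>) \<in> S"
      using fun_subspace_add[OF insert.prems(2) W0] W1(1) by simp
    ultimately show ?thesis
      by blast
  qed
qed

end

definition pairing_topology ::
    "('a \<Rightarrow> real) set \<Rightarrow> ('a \<Rightarrow> real) set \<Rightarrow> (('a \<Rightarrow> real) \<Rightarrow> ('a \<Rightarrow> real) \<Rightarrow> real)
      \<Rightarrow> ('a \<Rightarrow> real) topology" where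
  "pairing_topology V Vd pair = topology_generated_by {{X\<in>V. pair X Y \<in> U} |Y U. Y \<in> Vd \<and> open U}"

context dual_pairing
begin

abbreviation weak_topology :: "('a \<Rightarrow> real) topology" where
  "weak_topology \<equiv> pairing_topology V Vd pair"

abbreviation weak_nhd :: "('a \<Rightarrow> real) set \<Rightarrow> real \<Rightarrow> ('a \<Rightarrow> real) \<Rightarrow> ('a \<Rightarrow> real) set" where
  "weak_nhd F e X \<equiv> {W\<in>V. \<forall>Y\<in>F. \<bar>pair W Y - pair X Y\<bar> < e}"

lemma topspace_weak_topology: "topspace weak_topology = V"
proof -
  have "V \<in> {{X\<in>V. pair X Y \<in> U} |Y U. Y \<in> Vd \<and> open U}"
    using fun_subspace_zero[OF subspace_Vd] by (intro CollectI exI[of _ "\<lambda>_. 0"] exI[of _ UNIV]) simp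
  moreover have "\<Union>{{X\<in>V. pair X Y \<in> U} |Y U. Y \<in> Vd \<and> open U} \<subseteq> V"
    by blast
  ultimately show ?thesis
    unfolding pairing_topology_def topology_generated_by_topspace by blast
qed

lemma openin_weak_topology_nhd:
  assumes "openin weak_topology T" "X \<in> T"
  shows "\<exists>F e. finite F \<and> F \<subseteq> Vd \<and> 0 < e \<and> weak_nhd F e X \<subseteq> T"
proof -
  have "generate_topology_on {{X\<in>V. pair X Y \<in> U} |Y U. Y \<in> Vd \<and> open U} T"
    using assms(1) unfolding pairing_topology_def openin_topology_generated_by_iff .
  then show ?thesis
    using assms(2)
  proof (induction arbitrary: X)
    case Empty
    then show ?case
      by simp
  next
    case (Int a b)
    obtain F1 e1 where 1: "finite F1" "F1 \<subseteq> Vd" "0 < e1" "weak_nhd F1 e1 X \<subseteq> a"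
      using Int.IH(1)[of X] Int.prems by blast
    obtain F2 e2 where 2: "finite F2" "F2 \<subseteq> Vd" "0 < e2" "weak_nhd F2 e2 X \<subseteq> b"
      using Int.IH(2)[of X] Int.prems by blast
    have "weak_nhd (F1 \<union> F2) (min e1 e2) X \<subseteq> weak_nhd F1 e1 X \<inter> weak_nhd F2 e2 X"
      by auto
    then have "weak_nhd (F1 \<union> F2) (min e1 e2) X \<subseteq> a \<inter> b"
      using 1(4) 2(4) by blast
    moreover have "finite (F1 \<union> F2)" "F1 \<union> F2 \<subseteq> Vd" "0 < min e1 e2"
      using 1 2 by auto
    ultimately show ?case
      by blast
  next
    case (UN K)
    then obtain k where k: "k \<in> K" "X \<in> k"
      by blast
    obtain F e where "finite F" "F \<subseteq> Vd" "0 < e" and nhd: "weak_nhd F e X \<subseteq> k"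
      using UN.IH[OF k] by blast
    moreover have "weak_nhd F e X \<subseteq> \<Union>K"
      using nhd k(1) by blast
    ultimately show ?case
      by blast
  next
    case (Basis s)
    then obtain Y U where s: "s = {X\<in>V. pair X Y \<in> U}" and Y: "Y \<in> Vd" and U: "open U"
      by blast
    then have "pair X Y \<in> U"
      using Basis.prems by simp
    then obtain e where e: "0 < e" "\<And>y. dist y (pair X Y) < e \<Longrightarrow> y \<in> U"
      using U unfolding open_dist by blast
    have "weak_nhd {Y} e X \<subseteq> s"
    proof
      fix W assume "W \<in> weak_nhd {Y} e X"
      then have "W \<in> V" "dist (pair W Y) (pair X Y) < e"
        by (simp_all add: dist_real_def)
      then show "W \<in> s"
        using e(2) unfolding s by simp
    qed
    then show ?case
      using e(1) Y by (intro exI[of _ "{Y}"] exI[of _ e]) simp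
  qed
qed

lemma subset_weak_closure_if_annihilator:
  assumes "fun_subspace S" "fun_subspace G" "S \<subseteq> G" "G \<subseteq> V"
    and "\<And>Y. Y \<in> Vd \<Longrightarrow> \<forall>W\<in>S. pair W Y = 0 \<Longrightarrow> \<forall>X\<in>G. pair X Y = 0"
  shows "G \<subseteq> weak_topology closure_of S"
proof
  fix X assume X: "X \<in> G"
  have "\<exists>W. W \<in> S \<and> W \<in> T" if T: "X \<in> T" "openin weak_topology T" for T
  proof -
    obtain F e where F: "finite F" "F \<subseteq> Vd" "0 < e" and nhd: "weak_nhd F e X \<subseteq> T"
      using openin_weak_topology_nhd[OF T(2,1)] by blast
    obtain W where "W \<in> S" "\<forall>Y\<in>F. pair W Y = pair X Y"
      using finite_interpolation[OF F(1,2) assms X] by blast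
    moreover have "W \<in> V"
      using \<open>W \<in> S\<close> assms(3,4) by blast
    ultimately have "W \<in> weak_nhd F e X"
      using F(3) by simp
    then show ?thesis
      using nhd \<open>W \<in> S\<close> by blast
  qed
  then show "X \<in> weak_topology closure_of S"
    using X assms(4) by (auto simp: in_closure_of topspace_weak_topology)
qed

lemma weak_closure_subset_kernel:
  assumes Y: "Y \<in> Vd" and S: "\<forall>W\<in>S. pair W Y = 0"
  shows "weak_topology closure_of S \<subseteq> {X\<in>V. pair X Y = 0}"
proof
  fix X assume "X \<in> weak_topology closure_of S"
  then have "X \<in> V" and X: "\<And>T. X \<in> T \<Longrightarrow> openin weak_topology T \<Longrightarrow> \<exists>W. W \<in> S \<and> W \<in> T"
    unfolding in_closure_of topspace_weak_topology by blast+
  have "{X\<in>V. pair X Y \<in> - {0}} \<in> {{X\<in>V. pair X Y \<in> U} |Y U. Y \<in> Vd \<and> open U}"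
    using Y by (intro CollectI exI[of _ Y] exI[of _ "- {0}"]) (simp add: open_Compl)
  then have open_T: "openin weak_topology {X\<in>V. pair X Y \<in> - {0}}"
    unfolding pairing_topology_def openin_topology_generated_by_iff
    by (rule generate_topology_on.Basis)
  show "X \<in> {X\<in>V. pair X Y = 0}"
  proof (rule ccontr)
    assume "X \<notin> {X\<in>V. pair X Y = 0}"
    then have "X \<in> {X\<in>V. pair X Y \<in> - {0}}"
      using \<open>X \<in> V\<close> by simp
    then obtain W where "W \<in> S" "W \<in> {X\<in>V. pair X Y \<in> - {0}}"
      using X[OF _ open_T] by blast
    then show False
      using S by simp
  qed
qed

lemma weak_closure_if_annihilators_multiple:
  assumes S: "fun_subspace S" "S \<subseteq> V" and Y1: "Y1 \<in> Vd"
    and multiple: "\<And>Y. Y \<in> Vd \<Longrightarrow> \<forall>W\<in>S. pair W Y = 0 \<Longrightarrow> \<exists>c. \<forall>X\<in>V. pair X Y = c * pair X Y1"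
  shows weak_closure_eq_space: "\<exists>Z\<in>S. pair Z Y1 \<noteq> 0 \<Longrightarrow> weak_topology closure_of S = V"
    and weak_closure_eq_kernel:
      "\<forall>W\<in>S. pair W Y1 = 0 \<Longrightarrow> weak_topology closure_of S = {X\<in>V. pair X Y1 = 0}"
proof -
  have closure_V: "weak_topology closure_of S \<subseteq> V"
    using closure_of_subset_topspace topspace_weak_topology by metis
  show "weak_topology closure_of S = V" if nonzero: "\<exists>Z\<in>S. pair Z Y1 \<noteq> 0"
  proof
    obtain Z where "Z \<in> S" "pair Z Y1 \<noteq> 0"
      using nonzero ..
    have "\<forall>X\<in>V. pair X Y = 0" if Y: "Y \<in> Vd" "\<forall>W\<in>S. pair W Y = 0" for Y
    proof -
      obtain c where c: "\<forall>X\<in>V. pair X Y = c * pair X Y1"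
        using multiple[OF Y] ..
      have "Z \<in> V"
        using \<open>Z \<in> S\<close> S(2) by blast
      then have "pair Z Y = c * pair Z Y1" "pair Z Y = 0"
        using c Y(2) \<open>Z \<in> S\<close> by blast+
      then have "c * pair Z Y1 = 0"
        by simp
      then show ?thesis
        using c \<open>pair Z Y1 \<noteq> 0\<close> by simp
    qed
    then show "V \<subseteq> weak_topology closure_of S"
      using subset_weak_closure_if_annihilator[OF S(1) subspace_V S(2) order_refl] by blast
  qed (rule closure_V)
  show "weak_topology closure_of S = {X\<in>V. pair X Y1 = 0}" if S_Y1: "\<forall>W\<in>S. pair W Y1 = 0"
  proof
    show "weak_topology closure_of S \<subseteq> {X\<in>V. pair X Y1 = 0}"
      by (rule weak_closure_subset_kernel[OF Y1 S_Y1])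
    have "\<forall>X\<in>{X\<in>V. pair X Y1 = 0}. pair X Y = 0" if "Y \<in> Vd" "\<forall>W\<in>S. pair W Y = 0" for Y
      using multiple[OF that] by auto
    moreover have "S \<subseteq> {X\<in>V. pair X Y1 = 0}"
      using S(2) S_Y1 by auto
    ultimately show "{X\<in>V. pair X Y1 = 0} \<subseteq> weak_topology closure_of S"
      using subset_weak_closure_if_annihilator[OF S(1) fun_subspace_kernel[OF subspace_V order_refl Y1]]
      by blast
  qed
qed

end

lemma dual_pairing_integral:
  fixes M :: "'a measure"
  assumes "fun_subspace V" "fun_subspace Vd"
    and integrable: "\<And>X Y. X \<in> V \<Longrightarrow> Y \<in> Vd \<Longrightarrow> integrable M (\<lambda>\<omega>. X \<omega> * Y \<omega>)"
  shows "dual_pairing V Vd (\<lambda>X Y. \<integral>\<omega>. X \<omega> * Y \<omega> \<partial>M)"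
proof
  fix X W Y Y' :: "'a \<Rightarrow> real" and c :: real
  show "(\<integral>\<omega>. (X \<omega> + W \<omega>) * Y \<omega> \<partial>M) = (\<integral>\<omega>. X \<omega> * Y \<omega> \<partial>M) + (\<integral>\<omega>. W \<omega> * Y \<omega> \<partial>M)"
    if "X \<in> V" "W \<in> V" "Y \<in> Vd"
    using integrable[OF that(1,3)] integrable[OF that(2,3)] by (simp add: distrib_right)
  show "(\<integral>\<omega>. X \<omega> * (Y \<omega> + Y' \<omega>) \<partial>M) = (\<integral>\<omega>. X \<omega> * Y \<omega> \<partial>M) + (\<integral>\<omega>. X \<omega> * Y' \<omega> \<partial>M)"
    if "X \<in> V" "Y \<in> Vd" "Y' \<in> Vd"
    using integrable[OF that(1,2)] integrable[OF that(1,3)] by (simp add: distrib_left)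
  show "(\<integral>\<omega>. c * X \<omega> * Y \<omega> \<partial>M) = c * (\<integral>\<omega>. X \<omega> * Y \<omega> \<partial>M)"
    by (simp add: mult.assoc)
  show "(\<integral>\<omega>. X \<omega> * (c * Y \<omega>) \<partial>M) = c * (\<integral>\<omega>. X \<omega> * Y \<omega> \<partial>M)"
    by (simp add: mult.left_commute)
qed (use assms in auto)

lemma weak_top_eq_pairing_topology:
  "weak_top M V Vd = pairing_topology V Vd (\<lambda>X Y. \<integral>\<omega>. X \<omega> * Y \<omega> \<partial>M)"
  unfolding weak_top_def pairing_topology_def ..

section \<open>The span of a law class\<close>

lemma (in prob_space) annihilator_of_law_class_span:
  fixes Y Z :: "'a \<Rightarrow> real" and \<X> :: "('a \<Rightarrow> real) set"
  assumes na: "nonatomic M" and adm: "admissible_space M \<X>" and Y: "integrable M Y"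
    and integrable_mult: "\<forall>X\<in>\<X>. integrable M (\<lambda>\<omega>. X \<omega> * Y \<omega>)"
    and Z: "Z \<in> \<X>" "\<not> (\<exists>c. AE \<omega> in M. Z \<omega> = c)"
    and annihilates: "\<forall>W\<in>fun_span (law_class M \<X> Z). (\<integral>\<omega>. W \<omega> * Y \<omega> \<partial>M) = 0"
  shows "\<exists>c. \<forall>X\<in>\<X>. (\<integral>\<omega>. X \<omega> * Y \<omega> \<partial>M) = c * expectation X"
proof -
  have law_inv: "law_invariant M \<X>" and integrable: "\<And>X. X \<in> \<X> \<Longrightarrow> integrable M X"
    using adm unfolding admissible_space_def by auto
  have "\<forall>W\<in>law_class M \<X> Z. (\<integral>\<omega>. W \<omega> * Y \<omega> \<partial>M) = 0"
    using annihilates fun_span_superset by blast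
  then obtain c where c: "AE \<omega> in M. Y \<omega> = c"
    using AE_const_if_law_class_pairing_const[OF na law_inv integrable _ Y Z] integrable_mult by auto
  have "(\<integral>\<omega>. X \<omega> * Y \<omega> \<partial>M) = c * expectation X" if "X \<in> \<X>" for X
  proof -
    have "(\<integral>\<omega>. X \<omega> * Y \<omega> \<partial>M) = (\<integral>\<omega>. X \<omega> * c \<partial>M)"
      using c integrable[OF that] integrable_mult that by (intro integral_cong_AE) auto
    then show ?thesis
      by simp
  qed
  then show ?thesis
    by blast
qed

lemma admissible_space_const:
  assumes "admissible_space M \<X>"
  shows "(\<lambda>_. c) \<in> \<X>"
proof -
  have bounded: "\<And>X. X \<in> borel_measurable M \<Longrightarrow> \<exists>C. AE \<omega> in M. \<bar>X \<omega>\<bar> \<le> C \<Longrightarrow> X \<in> \<X>"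
    using assms unfolding admissible_space_def by blast
  show ?thesis
    by (intro bounded exI[of _ "\<bar>c\<bar>"]) simp_all
qed

lemma (in prob_space) expectation_fun_span_law_class:
  assumes adm: "admissible_space M \<X>" and Z: "Z \<in> \<X>" "expectation Z = 0"
    and W: "W \<in> fun_span (law_class M \<X> Z)"
  shows "expectation W = 0"
proof -
  have \<X>: "fun_subspace \<X>" and integrable: "\<And>X. X \<in> \<X> \<Longrightarrow> integrable M X"
    using adm unfolding admissible_space_def by auto
  have "fun_subspace {X\<in>\<X>. expectation X = 0}"
    using fun_subspaceD[OF \<X>] integrable unfolding fun_subspace_def by auto
  moreover have "law_class M \<X> Z \<subseteq> {X\<in>\<X>. expectation X = 0}"
  proof
    fix X assume "X \<in> law_class M \<X> Z"
    then have "X \<in> \<X>" "distr M borel X = distr M borel Z"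
      unfolding law_class_def by auto
    then have "expectation X = expectation Z"
      using expectation_eq_if_distr_eq[OF borel_measurable_integrable borel_measurable_integrable]
        integrable Z(1) by blast
    then show "X \<in> {X\<in>\<X>. expectation X = 0}"
      using Z(2) \<open>X \<in> \<X>\<close> by simp
  qed
  ultimately show ?thesis
    using fun_span_least W by blast
qed

theorem lemma4p4:
  fixes M :: "'a measure" and \<X> \<X>d :: "('a \<Rightarrow> real) set" and Z :: "'a \<Rightarrow> real"
  assumes "prob_space M"
    and "nonatomic M"
    and "admissible_space M \<X>"
    and "admissible_space M \<X>d"
    and "\<forall>X\<in>\<X>. \<forall>Y\<in>\<X>d. integrable M (\<lambda>\<omega>. X \<omega> * Y \<omega>)"
    and "Z \<in> \<X>"
    and "\<not> (\<exists>c. AE \<omega> in M. Z \<omega> = c)"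
  shows "((\<integral>\<omega>. Z \<omega> \<partial>M) \<noteq> 0 \<longrightarrow>
            weak_top M \<X> \<X>d closure_of (fun_span (law_class M \<X> Z)) = \<X>)
       \<and> ((\<integral>\<omega>. Z \<omega> \<partial>M) = 0 \<longrightarrow>
            weak_top M \<X> \<X>d closure_of (fun_span (law_class M \<X> Z))
              = {X\<in>\<X>. (\<integral>\<omega>. X \<omega> \<partial>M) = 0})"
proof -
  interpret prob_space M by fact
  have \<X>: "fun_subspace \<X>" and \<X>d: "fun_subspace \<X>d" "\<And>Y. Y \<in> \<X>d \<Longrightarrow> integrable M Y"
    using assms(3,4) unfolding admissible_space_def by auto
  have one: "(\<lambda>_. 1) \<in> \<X>d"
    by (rule admissible_space_const[OF assms(4)])
  interpret dual_pairing \<X> \<X>d "\<lambda>X Y. \<integral>\<omega>. X \<omega> * Y \<omega> \<partial>M"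
    using dual_pairing_integral[OF \<X> \<X>d(1)] assms(5) by blast
  define S where "S = fun_span (law_class M \<X> Z)"
  have S: "fun_subspace S" "S \<subseteq> \<X>" "Z \<in> S"
    using fun_span_superset[of "law_class M \<X> Z"] fun_span_least[OF _ \<X>] assms(6)
    unfolding S_def law_class_def by (auto simp: fun_subspace_fun_span)
  have "\<exists>c. \<forall>X\<in>\<X>. (\<integral>\<omega>. X \<omega> * Y \<omega> \<partial>M) = c * (\<integral>\<omega>. X \<omega> * 1 \<partial>M)"
    if "Y \<in> \<X>d" "\<forall>W\<in>S. (\<integral>\<omega>. W \<omega> * Y \<omega> \<partial>M) = 0" for Y
    using annihilator_of_law_class_span[OF assms(2,3) \<X>d(2)[OF that(1)] _ assms(6,7)] assms(5) that
    unfolding S_def by simp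
  note closure = weak_closure_eq_space[OF S(1,2) one this] weak_closure_eq_kernel[OF S(1,2) one this]
  have "weak_top M \<X> \<X>d closure_of S = \<X>" if "(\<integral>\<omega>. Z \<omega> \<partial>M) \<noteq> 0"
  proof -
    have "\<exists>W\<in>S. (\<integral>\<omega>. W \<omega> * 1 \<partial>M) \<noteq> 0"
      using S(3) that by auto
    then show ?thesis
      using closure(1) by (simp add: weak_top_eq_pairing_topology)
  qed
  moreover have "weak_top M \<X> \<X>d closure_of S = {X\<in>\<X>. (\<integral>\<omega>. X \<omega> \<partial>M) = 0}"
    if "(\<integral>\<omega>. Z \<omega> \<partial>M) = 0"
    using closure(2) expectation_fun_span_law_class[OF assms(3,6) that] unfolding S_def
    by (simp add: weak_top_eq_pairing_topology)
  ultimately show ?thesis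
    unfolding S_def by blast
qed

end
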